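(* Let $\mathbb{k}$ be an algebraically closed field of characteristic $0$, $n\ge1$, $0\le v\le n-1$ integers, $\xi\in\mathbb{k}$ a primitive $n$-th root of unity, $m:=n/\gcd(n,v)$. Then, as an algebra, the finite dual $T_\infty(n,v,\xi)^\circ$ is generated by the elements $\psi_\lambda$ ($\lambda\in\mathbb{k}$), $\omega$, $E_2$ and $E_1$ defined below.
   Context: $T_\infty(n,v,\xi)$ is the Hopf algebra generated by $g,x$ with relations $g^n=1$, $xg=\xi gx$, $\Delta(g)=g\otimes g$, $\Delta(x)=1\otimes x+x\otimes g^v$, $\varepsilon(g)=1$, $\varepsilon(x)=0$, $S(g)=g^{n-1}$, $S(x)=-\xi^{-v}g^{n-v}x$; it has basis $\{g^jx^l: 0\le j\le n-1, l\in\mathbb{N}\}$. The finite dual $H^\circ$ of a Hopf algebra $H$ is the set of $f\in H^*$ vanishing on some ideal of finite codimension, with the algebra structure dual to the coalgebra structure of $H$. Define linear functionals on $T_\infty(n,v,\xi)$ on this basis by: $\psi_\lambda(g^jx^l)=\lambda^{l/m}$ if $m\mid l$ and $0$ otherwise; $\omega(g^jx^l)=\delta_{l,0}\xi^j$; $E_1(g^jx^l)=\delta_{l,1}$; $E_2(g^jx^l)=\delta_{l,m}$ (these lie in $T_\infty(n,v,\xi)^\circ$). *)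

theory Defs
  imports "HOL-Computational_Algebra.Polynomial"
begin

text \<open>
The basis element g^j x^l (0 <= j < n, l in nat) is indexed by the pair (j,l).
An element of H is a finitely supported function nat*nat => 'k vanishing at indices
(j,l) with j >= n; an element of H (x) H is a finitely supported function on pairs of
basis indices.  A linear functional on H is determined by its values on the basis,
so functionals are functions nat*nat => 'k (normalised to be 0 at j >= n).
\<close>

definition supp :: "('a \<Rightarrow> 'k::zero) \<Rightarrow> 'a set" where
  "supp f = {p. f p \<noteq> 0}"

definition single :: "'a \<Rightarrow> 'k \<Rightarrow> ('a \<Rightarrow> 'k::zero)" where
  "single a c = (\<lambda>p. if p = a then c else 0)"

text \<open>Product of basis elements: (g^a x^b)(g^c x^d) = xi^(b c) g^((a+c) mod n) x^(b+d),
  using x g = xi g x.\<close>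
definition bcoef :: "'k::field \<Rightarrow> nat \<times> nat \<Rightarrow> nat \<times> nat \<Rightarrow> 'k" where
  "bcoef \<xi> p q = \<xi> ^ (snd p * fst q)"

definition bidx :: "nat \<Rightarrow> nat \<times> nat \<Rightarrow> nat \<times> nat \<Rightarrow> nat \<times> nat" where
  "bidx n p q = ((fst p + fst q) mod n, snd p + snd q)"

definition Hspace :: "nat \<Rightarrow> (nat \<times> nat \<Rightarrow> 'k::field) set" where
  "Hspace n = {a. finite (supp a) \<and> (\<forall>j l. n \<le> j \<longrightarrow> a (j, l) = 0)}"

definition hmul :: "nat \<Rightarrow> 'k::field \<Rightarrow> (nat \<times> nat \<Rightarrow> 'k) \<Rightarrow> (nat \<times> nat \<Rightarrow> 'k)
    \<Rightarrow> (nat \<times> nat \<Rightarrow> 'k)" where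
  "hmul n \<xi> a b = (\<lambda>t. \<Sum>p\<in>supp a. \<Sum>q\<in>supp b.
      (if bidx n p q = t then bcoef \<xi> p q * a p * b q else 0))"

definition tmul :: "nat \<Rightarrow> 'k::field
    \<Rightarrow> ((nat \<times> nat) \<times> (nat \<times> nat) \<Rightarrow> 'k)
    \<Rightarrow> ((nat \<times> nat) \<times> (nat \<times> nat) \<Rightarrow> 'k)
    \<Rightarrow> ((nat \<times> nat) \<times> (nat \<times> nat) \<Rightarrow> 'k)" where
  "tmul n \<xi> U W = (\<lambda>t. \<Sum>s\<in>supp U. \<Sum>r\<in>supp W.
      (if (bidx n (fst s) (fst r), bidx n (snd s) (snd r)) = t
       then bcoef \<xi> (fst s) (fst r) * bcoef \<xi> (snd s) (snd r) * U s * W r else 0))"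

primrec tpow :: "nat \<Rightarrow> 'k::field \<Rightarrow> ((nat \<times> nat) \<times> (nat \<times> nat) \<Rightarrow> 'k) \<Rightarrow> nat
    \<Rightarrow> ((nat \<times> nat) \<times> (nat \<times> nat) \<Rightarrow> 'k)" where
  "tpow n \<xi> U 0 = single ((0, 0), (0, 0)) 1"
| "tpow n \<xi> U (Suc k) = tmul n \<xi> (tpow n \<xi> U k) U"

text \<open>Delta(g) = g (x) g and Delta(x) = 1 (x) x + x (x) g^v.\<close>
definition Delta_g :: "nat \<Rightarrow> ((nat \<times> nat) \<times> (nat \<times> nat) \<Rightarrow> 'k::field)" where
  "Delta_g n = single ((1 mod n, 0), (1 mod n, 0)) 1"

definition Delta_x :: "nat \<Rightarrow> nat \<Rightarrow> ((nat \<times> nat) \<times> (nat \<times> nat) \<Rightarrow> 'k::field)" where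
  "Delta_x n v = (\<lambda>t. single ((0, 0), (0, 1)) 1 t + single ((0, 1), (v mod n, 0)) 1 t)"

text \<open>Delta(g^j x^l) = Delta(g)^j Delta(x)^l, since Delta is an algebra map.\<close>
definition Delta :: "nat \<Rightarrow> nat \<Rightarrow> 'k::field \<Rightarrow> nat \<times> nat
    \<Rightarrow> ((nat \<times> nat) \<times> (nat \<times> nat) \<Rightarrow> 'k)" where
  "Delta n v \<xi> p = tmul n \<xi> (tpow n \<xi> (Delta_g n) (fst p)) (tpow n \<xi> (Delta_x n v) (snd p))"

definition conv :: "nat \<Rightarrow> nat \<Rightarrow> 'k::field \<Rightarrow> (nat \<times> nat \<Rightarrow> 'k) \<Rightarrow> (nat \<times> nat \<Rightarrow> 'k)
    \<Rightarrow> (nat \<times> nat \<Rightarrow> 'k)" where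
  "conv n v \<xi> f h = (\<lambda>p. if fst p < n then
      (\<Sum>s\<in>supp (Delta n v \<xi> p). Delta n v \<xi> p s * f (fst s) * h (snd s)) else 0)"

definition counit :: "nat \<Rightarrow> (nat \<times> nat \<Rightarrow> 'k::field)" where
  "counit n = (\<lambda>(j, l). if j < n \<and> l = 0 then 1 else 0)"

definition evalf :: "(nat \<times> nat \<Rightarrow> 'k::field) \<Rightarrow> (nat \<times> nat \<Rightarrow> 'k) \<Rightarrow> 'k" where
  "evalf f a = (\<Sum>p\<in>supp a. a p * f p)"

definition is_ideal :: "nat \<Rightarrow> 'k::field \<Rightarrow> (nat \<times> nat \<Rightarrow> 'k) set \<Rightarrow> bool" where
  "is_ideal n \<xi> I \<longleftrightarrow> I \<subseteq> Hspace n \<and> (\<lambda>_. 0) \<in> I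
     \<and> (\<forall>a\<in>I. \<forall>b\<in>I. (\<lambda>p. a p + b p) \<in> I)
     \<and> (\<forall>c. \<forall>a\<in>I. (\<lambda>p. c * a p) \<in> I)
     \<and> (\<forall>a\<in>Hspace n. \<forall>b\<in>I. hmul n \<xi> a b \<in> I \<and> hmul n \<xi> b a \<in> I)"

definition finite_codim :: "nat \<Rightarrow> (nat \<times> nat \<Rightarrow> 'k::field) set \<Rightarrow> bool" where
  "finite_codim n I \<longleftrightarrow> (\<exists>F. finite F \<and> F \<subseteq> Hspace n \<and>
     (\<forall>a\<in>Hspace n. \<exists>c. (\<lambda>p. a p - (\<Sum>h\<in>F. c h * h p)) \<in> I))"

definition finite_dual :: "nat \<Rightarrow> 'k::field \<Rightarrow> (nat \<times> nat \<Rightarrow> 'k) set" where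
  "finite_dual n \<xi> = {f. (\<forall>j l. n \<le> j \<longrightarrow> f (j, l) = 0) \<and>
     (\<exists>I. is_ideal n \<xi> I \<and> finite_codim n I \<and> (\<forall>a\<in>I. evalf f a = 0))}"

inductive_set gen_alg :: "nat \<Rightarrow> nat \<Rightarrow> 'k::field \<Rightarrow> (nat \<times> nat \<Rightarrow> 'k) set
    \<Rightarrow> (nat \<times> nat \<Rightarrow> 'k) set"
  for n v \<xi> G where
  gen: "f \<in> G \<Longrightarrow> f \<in> gen_alg n v \<xi> G"
| unit: "counit n \<in> gen_alg n v \<xi> G"
| add: "f \<in> gen_alg n v \<xi> G \<Longrightarrow> h \<in> gen_alg n v \<xi> G \<Longrightarrow> (\<lambda>p. f p + h p) \<in> gen_alg n v \<xi> G"
| smult: "f \<in> gen_alg n v \<xi> G \<Longrightarrow> (\<lambda>p. c * f p) \<in> gen_alg n v \<xi> G"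
| mult: "f \<in> gen_alg n v \<xi> G \<Longrightarrow> h \<in> gen_alg n v \<xi> G \<Longrightarrow> conv n v \<xi> f h \<in> gen_alg n v \<xi> G"

definition psi :: "nat \<Rightarrow> nat \<Rightarrow> 'k::field \<Rightarrow> (nat \<times> nat \<Rightarrow> 'k)" where
  "psi n v c = (\<lambda>(j, l). let m = n div gcd n v in
      if j < n \<and> m dvd l then c ^ (l div m) else 0)"

definition omega :: "nat \<Rightarrow> 'k::field \<Rightarrow> (nat \<times> nat \<Rightarrow> 'k)" where
  "omega n \<xi> = (\<lambda>(j, l). if j < n \<and> l = 0 then \<xi> ^ j else 0)"

definition E1 :: "nat \<Rightarrow> (nat \<times> nat \<Rightarrow> 'k::field)" where
  "E1 n = (\<lambda>(j, l). if j < n \<and> l = 1 then 1 else 0)"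

definition E2 :: "nat \<Rightarrow> nat \<Rightarrow> (nat \<times> nat \<Rightarrow> 'k::field)" where
  "E2 n v = (\<lambda>(j, l). if j < n \<and> l = n div gcd n v then 1 else 0)"

definition alg_closed_field :: "'k::field itself \<Rightarrow> bool" where
  "alg_closed_field _ \<longleftrightarrow> (\<forall>p :: 'k poly. 0 < degree p \<longrightarrow> (\<exists>x. poly p x = 0))"

end

theory Submission
  imports Defs
begin

text \<open>
  A functional on \<open>T\<^sub>\<infinity>(n,v,\<xi>)\<close> is a function \<open>f\<close> on the basis \<open>g\<^sup>j x\<^sup>l\<close>. Both sides of the
  theorem equal the space of \<^emph>\<open>linearly recursive\<close> functionals: those for which every
  column \<open>l \<mapsto> f (j, l)\<close> satisfies a nontrivial linear recurrence of step \<open>m\<close> with constant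
  coefficients.

  For the finite dual: a finite-codimensional ideal contains a nonzero polynomial in \<open>x\<^sup>m\<close>, and
  its left translates turn \<open>f(I) = 0\<close> into such recurrences. Conversely, the functionals
  satisfying a fixed recurrence of step \<open>n\<close> are stable under left and right translation, so
  their annihilator is a two-sided ideal, and it has finite codimension.

  For the generated algebra: as \<open>q = \<xi>\<^sup>v\<close> is a primitive \<open>m\<close>-th root of unity, \<open>x\<^sup>m\<close> is
  primitive, so shifting by \<open>m\<close> is a derivation of the convolution, whence products of
  recursive functionals are recursive. Conversely, over an algebraically closed field every
  solution of a recurrence is an exponential polynomial \<open>a \<mapsto> (a choose t) \<mu>\<^sup>a\<^sup>-\<^sup>t\<close> on each
  residue class \<open>l = m a + r\<close>; these are obtained from \<open>\<psi>\<^sub>\<mu>\<close> by convolving with \<open>E\<^sub>2\<close> (raising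
  \<open>t\<close>) and \<open>E\<^sub>1\<close> (raising \<open>r\<close>), and a single column is cut out by a Fourier sum of powers
  of \<open>\<omega>\<close>.
\<close>


section \<open>Gaussian binomial coefficients\<close>

fun qbinom :: "'a::comm_ring_1 \<Rightarrow> nat \<Rightarrow> nat \<Rightarrow> 'a" where
  "qbinom q 0 b = (if b = 0 then 1 else 0)"
| "qbinom q (Suc l) 0 = 1"
| "qbinom q (Suc l) (Suc b) = qbinom q l (Suc b) + q ^ (l - b) * qbinom q l b"

lemma qbinom_0_right [simp]: "qbinom q l 0 = 1"
  by (cases l) auto

lemma qbinom_eq_0: "l < b \<Longrightarrow> qbinom q l b = 0"
proof (induction l arbitrary: b)
  case (Suc l)
  then show ?case by (cases b) auto
qed simp

lemma qbinom_same [simp]: "qbinom q l l = 1"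
  by (induction l) (auto simp: qbinom_eq_0)

definition qint :: "'a::comm_ring_1 \<Rightarrow> nat \<Rightarrow> 'a" where
  "qint q k = (\<Sum>i<k. q ^ i)"

lemma qint_Suc: "qint q (Suc k) = qint q k + q ^ k"
  by (simp add: qint_def)

lemma qint_Suc_left: "qint q (Suc k) = 1 + q * qint q k"
  by (simp add: qint_def sum.lessThan_Suc_shift sum_distrib_left del: sum.lessThan_Suc)

lemma one_minus_mult_qint: "(1 - q) * qint q k = 1 - q ^ k"
  by (simp add: qint_def one_diff_power_eq)

lemma qint_eq_0_root_of_unity:
  fixes q :: "'a::idom"
  assumes "q ^ k = 1" "q \<noteq> 1"
  shows "qint q k = 0"
  using one_minus_mult_qint[of q k] assms by simp

lemma qint_nonzero:
  fixes q :: "'a::idom"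
  shows "q ^ k \<noteq> 1 \<Longrightarrow> qint q k \<noteq> 0"
  using one_minus_mult_qint[of q k] by auto

lemma qbinom_absorb:
  "qint q (Suc b) * qbinom q (Suc l) (Suc b) = qint q (Suc l) * qbinom q l b"
proof (induction l arbitrary: b)
  case 0
  then show ?case by (cases b) (simp_all add: qint_def)
next
  case (Suc l)
  show ?case
  proof (cases b)
    case 0
    then show ?thesis using Suc.IH[of 0] by (simp add: qint_Suc qint_def)
  next
    case b: (Suc c)
    show ?thesis
    proof (cases "c \<le> l")
      case True
      have pow: "q ^ (l - c) * q ^ Suc c = q ^ Suc l"
        using True by (metis power_add Suc_diff_le diff_Suc_Suc le_add_diff_inverse2 add_Suc_right)
      have "qint q (Suc b) * qbinom q (Suc (Suc l)) (Suc b)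
          = qint q (Suc b) * qbinom q (Suc l) (Suc b)
            + q ^ (l - c) * (qint q b * qbinom q (Suc l) b)
            + (q ^ (l - c) * q ^ Suc c) * qbinom q (Suc l) b"
        by (simp add: b qint_Suc algebra_simps)
      also have "\<dots> = qint q (Suc l) * (qbinom q l b + q ^ (l - c) * qbinom q l c)
            + q ^ Suc l * qbinom q (Suc l) b"
        by (simp only: Suc.IH pow b Suc.IH[of c]) (simp add: algebra_simps)
      also have "\<dots> = qint q (Suc (Suc l)) * qbinom q (Suc l) b"
        by (simp add: b qint_Suc algebra_simps)
      finally show ?thesis .
    next
      case False
      then show ?thesis by (simp add: b qbinom_eq_0)
    qed
  qed
qed

lemma qbinom_Suc_self: "qbinom q (Suc l) l = qint q (Suc l)"
proof (induction l)
  case (Suc l)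
  then show ?case by (simp add: qint_Suc_left)
qed (simp add: qint_def)

lemma qbinom_root_of_unity:
  fixes q :: "'a::idom"
  assumes "q ^ m = 1" and "\<forall>k. 0 < k \<and> k < m \<longrightarrow> q ^ k \<noteq> 1"
  shows "qbinom q m b = (if b = 0 \<or> b = m then 1 else 0)"
proof (cases "b = 0 \<or> b = m \<or> m < b")
  case False
  then obtain c where b: "b = Suc c" "Suc c < m"
    by (cases b) auto
  then have "q ^ 1 \<noteq> 1" "q ^ b \<noteq> 1"
    using assms(2) by auto
  then have "qint q m = 0" "qint q b \<noteq> 0"
    using assms(1) by (simp_all add: qint_eq_0_root_of_unity qint_nonzero)
  moreover have "qint q b * qbinom q m b = qint q m * qbinom q (m - 1) c"
    using qbinom_absorb[of q c "m - 1"] b by simp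
  ultimately show ?thesis using False by simp
qed (auto simp: qbinom_eq_0)

lemma qbinom_add_root_of_unity:
  fixes q :: "'a::idom"
  assumes "0 < m" "q ^ m = 1" and "\<forall>k. 0 < k \<and> k < m \<longrightarrow> q ^ k \<noteq> 1"
  shows "qbinom q (l + m) b = qbinom q l b + (if m \<le> b then qbinom q l (b - m) else 0)"
proof (induction l arbitrary: b)
  case 0
  then show ?case using qbinom_root_of_unity[OF assms(2,3)] assms(1) by (auto simp: qbinom_eq_0)
next
  case (Suc l)
  show ?case
  proof (cases b)
    case 0
    then show ?thesis using assms(1) by simp
  next
    case b: (Suc c)
    have periodic: "q ^ (l + m - c) * qbinom q l c = q ^ (l - c) * qbinom q l c"
    proof (cases "c \<le> l")
      case True
      then have "l + m - c = (l - c) + m" by simp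
      then show ?thesis using assms(2) by (simp add: power_add)
    qed (simp add: qbinom_eq_0)
    have tail: "(if m \<le> Suc c then qbinom q l (Suc c - m) else 0)
        + q ^ (l + m - c) * (if m \<le> c then qbinom q l (c - m) else 0)
        = (if m \<le> Suc c then qbinom q (Suc l) (Suc c - m) else 0)"
    proof (cases "m \<le> c")
      case True
      then have "Suc c - m = Suc (c - m)" "l + m - c = l - (c - m)" by auto
      then show ?thesis using True by simp
    qed (auto simp: le_Suc_eq)
    have "qbinom q (Suc l + m) b = qbinom q (l + m) (Suc c) + q ^ (l + m - c) * qbinom q (l + m) c"
      by (simp add: b)
    also have "\<dots> = qbinom q l (Suc c) + q ^ (l + m - c) * qbinom q l c
        + ((if m \<le> Suc c then qbinom q l (Suc c - m) else 0)
           + q ^ (l + m - c) * (if m \<le> c then qbinom q l (c - m) else 0))"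
      by (simp only: Suc.IH) (simp add: algebra_simps)
    also have "\<dots> = qbinom q (Suc l) b + (if m \<le> b then qbinom q (Suc l) (b - m) else 0)"
      by (simp only: periodic tail) (simp add: b)
    finally show ?thesis .
  qed
qed

lemma qbinom_mult_root_of_unity:
  fixes q :: "'a::idom"
  assumes "0 < m" "q ^ m = 1" and "\<forall>k. 0 < k \<and> k < m \<longrightarrow> q ^ k \<noteq> 1"
  shows "qbinom q (m * a + m) (m * a) = of_nat (Suc a)"
proof (induction a)
  case (Suc a)
  then show ?case
    using qbinom_add_root_of_unity[OF assms, of "m * Suc a" "m * Suc a"] by (simp add: algebra_simps)
qed simp

section \<open>Polynomials acting on sequences by shifts\<close>

text \<open>\<open>poly_shift d P s\<close> is \<open>P(E\<^sup>d) s\<close> for the shift \<open>(E s) l = s (l + 1)\<close>.\<close>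

definition poly_shift :: "nat \<Rightarrow> 'a::comm_semiring_1 poly \<Rightarrow> (nat \<Rightarrow> 'a) \<Rightarrow> nat \<Rightarrow> 'a" where
  "poly_shift d P s l = (\<Sum>k\<le>degree P. coeff P k * s (l + d * k))"

lemma poly_shift_conv_sum:
  "degree P < N \<Longrightarrow> poly_shift d P s l = (\<Sum>k<N. coeff P k * s (l + d * k))"
  unfolding poly_shift_def by (rule sum.mono_neutral_left) (auto simp: coeff_eq_0)

lemma poly_shift_0 [simp]: "poly_shift d 0 s l = 0"
  by (simp add: poly_shift_def)

lemma poly_shift_const: "poly_shift d [:a:] s l = a * s l"
  by (simp add: poly_shift_def)

lemma poly_shift_pCons: "poly_shift d (pCons a P) s l = a * s l + poly_shift d P s (l + d)"
proof -
  have "poly_shift d (pCons a P) s l = (\<Sum>k<Suc (Suc (degree P)). coeff (pCons a P) k * s (l + d * k))"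
    by (rule poly_shift_conv_sum) (simp add: degree_pCons_le le_imp_less_Suc)
  also have "\<dots> = a * s l + (\<Sum>k<Suc (degree P). coeff P k * s (l + d + d * k))"
    by (simp add: sum.lessThan_Suc_shift algebra_simps del: sum.lessThan_Suc)
  also have "\<dots> = a * s l + poly_shift d P s (l + d)"
    by (subst poly_shift_conv_sum[of P "Suc (degree P)"]) (simp_all add: add.assoc)
  finally show ?thesis .
qed

lemma poly_shift_add: "poly_shift d (P + Q) s l = poly_shift d P s l + poly_shift d Q s l"
proof -
  define N where "N = Suc (max (degree P) (degree Q))"
  have "degree (P + Q) < N" "degree P < N" "degree Q < N"
    using degree_add_le_max[of P Q] by (auto simp: N_def)
  then show ?thesis by (simp add: poly_shift_conv_sum sum.distrib distrib_right)
qed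

lemma poly_shift_smult: "poly_shift d (smult c P) s l = c * poly_shift d P s l"
proof -
  have N: "degree (smult c P) < Suc (degree P)" "degree P < Suc (degree P)"
    by (simp_all add: le_imp_less_Suc degree_smult_le)
  show ?thesis
    unfolding poly_shift_conv_sum[OF N(1)] poly_shift_conv_sum[OF N(2)]
    by (simp add: sum_distrib_left mult.assoc del: sum.lessThan_Suc)
qed

lemma poly_shift_mult: "poly_shift d (P * Q) s = poly_shift d P (poly_shift d Q s)"
proof (induction P rule: pCons_induct)
  case (pCons a P)
  show ?case
  proof
    fix l
    have "poly_shift d (pCons a P * Q) s l = a * poly_shift d Q s l + poly_shift d (pCons 0 (P * Q)) s l"
      by (simp add: poly_shift_add poly_shift_smult)
    also have "\<dots> = poly_shift d (pCons a P) (poly_shift d Q s) l"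
      by (simp add: poly_shift_pCons pCons.IH)
    finally show "poly_shift d (pCons a P * Q) s l = poly_shift d (pCons a P) (poly_shift d Q s) l" .
  qed
qed (simp add: fun_eq_iff)

lemma poly_shift_add_seq:
  "poly_shift d P (\<lambda>l. s l + t l) l = poly_shift d P s l + poly_shift d P t l"
  by (simp add: poly_shift_def sum.distrib distrib_left)

lemma poly_shift_cmult_seq: "poly_shift d P (\<lambda>l. c * s l) l = c * poly_shift d P s l"
  by (simp add: poly_shift_def sum_distrib_left algebra_simps)

lemma poly_shift_zero_seq: "poly_shift d P (\<lambda>l. 0) l = 0"
  by (simp add: poly_shift_def)

lemma poly_shift_linear:
  fixes \<mu> :: "'a::comm_ring_1"
  shows "poly_shift d [:- \<mu>, 1:] s l = s (l + d) - \<mu> * s l"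
  by (simp add: poly_shift_pCons poly_shift_const)

lemma poly_shift_monom: "poly_shift d (monom 1 g) s l = s (l + d * g)"
proof -
  have "degree (monom (1::'a) g) < Suc g" by (simp add: degree_monom_eq)
  then have "poly_shift d (monom 1 g) s l = (\<Sum>k<Suc g. (if g = k then 1 else 0) * s (l + d * k))"
    by (simp add: poly_shift_conv_sum coeff_monom del: sum.lessThan_Suc)
  also have "\<dots> = s (l + d * g)" by (simp add: if_distrib sum.delta cong: if_cong)
  finally show ?thesis .
qed

lemma coeff_sum_monom: "coeff (\<Sum>k\<le>N. monom (c k) k) i = (if i \<le> N then c i else 0)"
  by (simp add: coeff_sum coeff_monom)

lemma poly_shift_sum_monom: "poly_shift d (\<Sum>k\<le>N. monom (c k) k) s l = (\<Sum>k\<le>N. c k * s (l + d * k))"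
proof -
  have "degree (\<Sum>k\<le>N. monom (c k) k) < Suc N"
    using degree_le[of N "\<Sum>k\<le>N. monom (c k) k"] by (simp add: coeff_sum_monom)
  then show ?thesis by (simp add: poly_shift_conv_sum coeff_sum_monom lessThan_Suc_atMost)
qed

lemma poly_shift_pcompose_monom:
  "poly_shift d (pcompose Q (monom 1 g)) s = poly_shift (d * g) Q s"
proof (induction Q rule: pCons_induct)
  case (pCons a Q)
  show ?case
  proof
    fix l
    have "poly_shift d (pcompose (pCons a Q) (monom 1 g)) s l
        = a * s l + poly_shift d (monom 1 g * pcompose Q (monom 1 g)) s l"
      by (simp add: pcompose_pCons poly_shift_add poly_shift_const)
    also have "\<dots> = poly_shift (d * g) (pCons a Q) s l"
      by (simp add: poly_shift_mult poly_shift_monom pCons.IH poly_shift_pCons)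
    finally show "poly_shift d (pcompose (pCons a Q) (monom 1 g)) s l = poly_shift (d * g) (pCons a Q) s l" .
  qed
qed (simp add: fun_eq_iff)

lemma poly_shift_dvd:
  assumes "P dvd R" and "\<And>l. poly_shift d P s l = 0"
  shows "poly_shift d R s l = 0"
proof -
  obtain S where "R = S * P" using assms(1) by (metis dvdE mult.commute)
  moreover have "poly_shift d P s = (\<lambda>_. 0)" using assms(2) by (rule ext)
  ultimately show ?thesis by (simp add: poly_shift_mult poly_shift_zero_seq)
qed

section \<open>Exponential polynomial sequences\<close>

definition binom_geom :: "nat \<Rightarrow> 'a::comm_semiring_1 \<Rightarrow> nat \<Rightarrow> 'a" where
  "binom_geom t \<mu> a = of_nat (a choose t) * \<mu> ^ (a - t)"

lemma binom_geom_0_Suc: "binom_geom 0 \<mu> (Suc a) = \<mu> * binom_geom 0 \<mu> a"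
  by (simp add: binom_geom_def)

lemma binom_geom_Suc_Suc:
  "binom_geom (Suc t) \<mu> (Suc a) = \<mu> * binom_geom (Suc t) \<mu> a + binom_geom t \<mu> a"
proof (cases "t < a")
  case True
  then have "\<mu> ^ (a - t) = \<mu> * \<mu> ^ (a - Suc t)"
    by (metis Suc_diff_Suc power_Suc)
  then show ?thesis by (simp add: binom_geom_def algebra_simps)
qed (auto simp: binom_geom_def binomial_eq_0 le_less)

lemma binom_geom_Suc_mult:
  "of_nat (Suc a) * binom_geom t \<mu> a = of_nat (Suc t) * binom_geom (Suc t) \<mu> (Suc a)"
proof -
  have "of_nat (Suc a) * of_nat (a choose t) = (of_nat (Suc t) * of_nat (Suc a choose Suc t) :: 'a)"
    by (metis Suc_times_binomial_eq mult.commute of_nat_mult)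
  then show ?thesis by (simp add: binom_geom_def mult.assoc[symmetric])
qed

text \<open>The sequences \<open>a \<mapsto> p(a) \<mu>\<^sup>a\<close> with \<open>p\<close> a polynomial; these are exactly the
  solutions of linear recurrences with constant coefficients.\<close>

inductive_set exp_poly_seqs :: "(nat \<Rightarrow> 'a::field) set" where
  binom_geom: "binom_geom t \<mu> \<in> exp_poly_seqs"
| zero: "(\<lambda>_. 0) \<in> exp_poly_seqs"
| add: "s \<in> exp_poly_seqs \<Longrightarrow> u \<in> exp_poly_seqs \<Longrightarrow> (\<lambda>a. s a + u a) \<in> exp_poly_seqs"
| cmult: "s \<in> exp_poly_seqs \<Longrightarrow> (\<lambda>a. c * s a) \<in> exp_poly_seqs"

lemma exp_poly_seqs_diff:
  "s \<in> exp_poly_seqs \<Longrightarrow> u \<in> exp_poly_seqs \<Longrightarrow> (\<lambda>a. s a - u a) \<in> exp_poly_seqs"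
  using exp_poly_seqs.add[of s "\<lambda>a. (-1) * u a"] exp_poly_seqs.cmult[of u "-1"] by simp

lemma exp_poly_seqs_geometric:
  assumes "\<And>a. s (Suc a) = \<mu> * s a"
  shows "s \<in> exp_poly_seqs"
proof -
  have "s = (\<lambda>a. s 0 * binom_geom 0 \<mu> a)"
  proof
    show "s a = s 0 * binom_geom 0 \<mu> a" for a
      by (induction a) (simp_all add: binom_geom_def assms)
  qed
  then show ?thesis using exp_poly_seqs.cmult[OF exp_poly_seqs.binom_geom] by metis
qed

lemma exp_poly_seqs_antidiff_binom_geom:
  "\<exists>w\<in>exp_poly_seqs. \<forall>a. w (Suc a) - \<mu> * w a = binom_geom t \<nu> a"
proof (cases "\<nu> = \<mu>")
  case True
  show ?thesis
    by (rule bexI[of _ "binom_geom (Suc t) \<nu>"])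
      (auto simp: binom_geom_Suc_Suc True intro: exp_poly_seqs.binom_geom)
next
  case False
  then have inv: "\<And>x. inverse (\<nu> - \<mu>) * ((\<nu> - \<mu>) * x) = x" by simp
  show ?thesis
  proof (induction t)
    case 0
    show ?case
    proof
      show "(\<lambda>a. inverse (\<nu> - \<mu>) * binom_geom 0 \<nu> a) \<in> exp_poly_seqs"
        by (intro exp_poly_seqs.cmult exp_poly_seqs.binom_geom)
      have "inverse (\<nu> - \<mu>) * binom_geom 0 \<nu> (Suc a) - \<mu> * (inverse (\<nu> - \<mu>) * binom_geom 0 \<nu> a)
          = inverse (\<nu> - \<mu>) * ((\<nu> - \<mu>) * binom_geom 0 \<nu> a)" for a
        by (simp add: binom_geom_0_Suc algebra_simps)
      then show "\<forall>a. inverse (\<nu> - \<mu>) * binom_geom 0 \<nu> (Suc a) - \<mu> * (inverse (\<nu> - \<mu>) * binom_geom 0 \<nu> a)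
          = binom_geom 0 \<nu> a"
        by (simp only: inv) simp
    qed
  next
    case (Suc t)
    then obtain w where w: "w \<in> exp_poly_seqs" "\<And>a. w (Suc a) = \<mu> * w a + binom_geom t \<nu> a"
      by (auto simp: algebra_simps)
    show ?case
    proof
      show "(\<lambda>a. inverse (\<nu> - \<mu>) * (binom_geom (Suc t) \<nu> a - w a)) \<in> exp_poly_seqs"
        by (intro exp_poly_seqs.cmult exp_poly_seqs_diff exp_poly_seqs.binom_geom w(1))
      have "inverse (\<nu> - \<mu>) * (binom_geom (Suc t) \<nu> (Suc a) - w (Suc a))
          - \<mu> * (inverse (\<nu> - \<mu>) * (binom_geom (Suc t) \<nu> a - w a))
          = inverse (\<nu> - \<mu>) * ((\<nu> - \<mu>) * binom_geom (Suc t) \<nu> a)" for a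
        by (simp add: w(2) binom_geom_Suc_Suc algebra_simps)
      then show "\<forall>a. inverse (\<nu> - \<mu>) * (binom_geom (Suc t) \<nu> (Suc a) - w (Suc a))
          - \<mu> * (inverse (\<nu> - \<mu>) * (binom_geom (Suc t) \<nu> a - w a)) = binom_geom (Suc t) \<nu> a"
        by (simp only: inv) simp
    qed
  qed
qed

lemma exp_poly_seqs_antidiff:
  "u \<in> exp_poly_seqs \<Longrightarrow> \<exists>w\<in>exp_poly_seqs. \<forall>a. w (Suc a) - \<mu> * w a = u a"
proof (induction rule: exp_poly_seqs.induct)
  case (binom_geom t \<nu>)
  then show ?case by (rule exp_poly_seqs_antidiff_binom_geom)
next
  case zero
  then show ?case by (rule bexI[of _ "\<lambda>_. 0"]) (auto intro: exp_poly_seqs.zero)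
next
  case (add s u)
  then obtain w1 w2 where "w1 \<in> exp_poly_seqs" "\<forall>a. w1 (Suc a) - \<mu> * w1 a = s a"
    and "w2 \<in> exp_poly_seqs" "\<forall>a. w2 (Suc a) - \<mu> * w2 a = u a"
    by blast
  then show ?case
    by (intro bexI[of _ "\<lambda>a. w1 a + w2 a"]) (auto simp: algebra_simps intro: exp_poly_seqs.add)
next
  case (cmult s c)
  then obtain w where "w \<in> exp_poly_seqs" "\<forall>a. w (Suc a) - \<mu> * w a = s a" by blast
  then show ?case
    by (intro bexI[of _ "\<lambda>a. c * w a"]) (auto simp: algebra_simps intro: exp_poly_seqs.cmult)
qed

lemma linear_recurrence_exp_poly_seqs:
  fixes P :: "'a::field poly"
  assumes "alg_closed_field TYPE('a)" and "P \<noteq> 0" and "\<And>a. poly_shift 1 P s a = 0"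
  shows "s \<in> exp_poly_seqs"
  using assms(2,3)
proof (induction "degree P" arbitrary: P s rule: less_induct)
  case less
  show ?case
  proof (cases "degree P = 0")
    case True
    then obtain c where "P = [:c:]" "c \<noteq> 0" using less.prems(1) by (metis degree_eq_zeroE pCons_0_0)
    then have "s = (\<lambda>_. 0)" using less.prems(2) by (auto simp: poly_shift_const)
    then show ?thesis by (simp add: exp_poly_seqs.zero)
  next
    case False
    then obtain \<mu> where "poly P \<mu> = 0" using assms(1) unfolding alg_closed_field_def by blast
    then obtain P' where P: "P = P' * [:-\<mu>, 1:]"
      by (metis dvd_def mult.commute poly_eq_0_iff_dvd)
    with less.prems(1) have "P' \<noteq> 0" by auto
    moreover from this have "degree P' < degree P"
      unfolding P by (subst degree_mult_eq) auto
    moreover have "poly_shift 1 [:-\<mu>, 1:] s = (\<lambda>a. s (Suc a) - \<mu> * s a)"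
      by (simp add: fun_eq_iff poly_shift_linear)
    ultimately have "(\<lambda>a. s (Suc a) - \<mu> * s a) \<in> exp_poly_seqs"
      using less.hyps less.prems(2) unfolding P poly_shift_mult by metis
    then obtain w where w: "w \<in> exp_poly_seqs" "\<forall>a. w (Suc a) - \<mu> * w a = s (Suc a) - \<mu> * s a"
      using exp_poly_seqs_antidiff by blast
    have "(\<lambda>a. s a - w a) \<in> exp_poly_seqs"
      by (rule exp_poly_seqs_geometric[where \<mu> = \<mu>]) (use w(2) in \<open>simp add: algebra_simps\<close>)
    then have "(\<lambda>a. (s a - w a) + w a) \<in> exp_poly_seqs" using w(1) by (rule exp_poly_seqs.add)
    then show ?thesis by simp
  qed
qed

lemma exists_multiple_pcompose_monom:
  fixes P :: "'a::field poly"
  assumes "alg_closed_field TYPE('a)" and "P \<noteq> 0"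
  shows "\<exists>Q. Q \<noteq> 0 \<and> P dvd pcompose Q (monom 1 g)"
  using assms(2)
proof (induction "degree P" arbitrary: P rule: less_induct)
  case less
  show ?case
  proof (cases "degree P = 0")
    case True
    then obtain c where "P = [:c:]" "c \<noteq> 0" using less.prems by (metis degree_eq_zeroE pCons_0_0)
    then show ?thesis by (intro exI[of _ 1]) (simp add: const_poly_dvd_iff dvd_field_iff)
  next
    case False
    then obtain \<mu> where "poly P \<mu> = 0" using assms(1) unfolding alg_closed_field_def by blast
    then obtain P' where P: "P = [:-\<mu>, 1:] * P'"
      by (metis dvd_def poly_eq_0_iff_dvd)
    with less.prems have "P' \<noteq> 0" by auto
    moreover from this have "degree P' < degree P"
      unfolding P by (subst degree_mult_eq) auto
    ultimately obtain Q where Q: "Q \<noteq> 0" "P' dvd pcompose Q (monom 1 g)"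
      using less.hyps by blast
    have "poly (pcompose [:-(\<mu> ^ g), 1:] (monom 1 g)) \<mu> = 0"
      by (simp add: poly_pcompose poly_monom)
    then have "[:-\<mu>, 1:] dvd pcompose [:-(\<mu> ^ g), 1:] (monom 1 g)"
      by (simp add: poly_eq_0_iff_dvd)
    then have "P dvd pcompose ([:-(\<mu> ^ g), 1:] * Q) (monom 1 g)"
      unfolding pcompose_mult P using Q(2) by (rule mult_dvd_mono)
    moreover have "[:-(\<mu> ^ g), 1:] \<noteq> 0" by simp
    then have "[:-(\<mu> ^ g), 1:] * Q \<noteq> 0" using Q(1) by (rule no_zero_divisors)
    ultimately show ?thesis by blast
  qed
qed

lemma underdetermined_homogeneous_system:
  fixes M :: "'i \<Rightarrow> 'j \<Rightarrow> 'a::field"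
  assumes "finite J" and "finite I" and "card J < card I"
  shows "\<exists>d. (\<exists>i\<in>I. d i \<noteq> 0) \<and> (\<forall>j\<in>J. (\<Sum>i\<in>I. d i * M i j) = 0)"
  using assms
proof (induction J arbitrary: I M rule: finite_induct)
  case empty
  then obtain i0 where "i0 \<in> I" by (metis card.empty card_gt_0_iff ex_in_conv)
  then show ?case by (intro exI[of _ "\<lambda>i. if i = i0 then 1 else 0"]) auto
next
  case (insert j J)
  show ?case
  proof (cases "\<forall>i\<in>I. M i j = 0")
    case True
    have "card J < card I" using insert.prems(2) insert.hyps(1,2) by simp
    then obtain d where "\<exists>i\<in>I. d i \<noteq> 0" "\<forall>j'\<in>J. (\<Sum>i\<in>I. d i * M i j') = 0"
      using insert.IH insert.prems(1) by blast
    with True show ?thesis by (intro exI[of _ d]) auto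
  next
    case False
    then obtain i0 where i0: "i0 \<in> I" "M i0 j \<noteq> 0" by blast
    \<comment> \<open>Gaussian elimination: use equation \<open>j\<close> to eliminate the unknown \<open>d i0\<close>.\<close>
    define M' where "M' i j' = M i j' - (M i j / M i0 j) * M i0 j'" for i j'
    have "card J < card (I - {i0})" using insert i0 by auto
    then obtain d' where d': "\<exists>i\<in>I - {i0}. d' i \<noteq> 0" "\<forall>j'\<in>J. (\<Sum>i\<in>I - {i0}. d' i * M' i j') = 0"
      using insert.IH[of "I - {i0}" M'] insert.prems(1) by auto
    define S where "S = (\<Sum>i\<in>I - {i0}. d' i * M i j)"
    define d where "d i = (if i = i0 then - S / M i0 j else d' i)" for i
    have split: "(\<Sum>i\<in>I. d i * M i j') = d i0 * M i0 j' + (\<Sum>i\<in>I - {i0}. d' i * M i j')" for j'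
      using i0 insert.prems(1) by (simp add: sum.remove d_def)
    have "(\<Sum>i\<in>I. d i * M i j') = 0" if "j' \<in> J" for j'
    proof -
      have "(\<Sum>i\<in>I - {i0}. d' i * M i j') = (\<Sum>i\<in>I - {i0}. d' i * M' i j') + (M i0 j' / M i0 j) * S"
        by (simp add: M'_def S_def sum_distrib_left sum.distrib[symmetric] algebra_simps)
      then show ?thesis unfolding split using d' that i0 by (simp add: d_def algebra_simps)
    qed
    moreover have "(\<Sum>i\<in>I. d i * M i j) = 0"
      unfolding split using i0 by (simp add: d_def S_def[symmetric])
    moreover have "\<exists>i\<in>I. d i \<noteq> 0" using d' by (auto simp: d_def)
    ultimately show ?thesis by (intro exI[of _ d]) blast
  qed
qed


section \<open>Coproduct and convolution in the basis model\<close>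

lemma supp_single_subset: "supp (single a c) \<subseteq> {a}"
  by (auto simp: supp_def single_def)

lemma single_apply: "single p c x = (if x = p then c else 0)"
  by (simp add: single_def)

lemma sum_supp_superset:
  assumes "finite A" "supp f \<subseteq> A" "\<And>x. f x = 0 \<Longrightarrow> G x = 0"
  shows "(\<Sum>x\<in>supp f. G x) = (\<Sum>x\<in>A. G x)"
  using assms by (intro sum.mono_neutral_left) (auto simp: supp_def)

lemma sum_delta_conj:
  "finite S \<Longrightarrow> (\<Sum>b\<in>S. if b = B \<and> P then g b else 0) = (if B \<in> S \<and> P then g B else 0)"
  by (cases P) (simp_all add: sum.delta)

lemma sum_atMost_add_shift:
  fixes l k :: nat
  shows "(\<Sum>b\<le>l + k. if k \<le> b then G (b - k) else 0) = (\<Sum>b\<le>l. G b :: 'a::comm_monoid_add)"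
proof (induction l)
  case 0
  have "(\<Sum>b\<le>k. if k \<le> b then G (b - k) else 0) = (\<Sum>b\<le>k. if b = k then G 0 else 0)"
    by (rule sum.cong) auto
  then show ?case by simp
next
  case (Suc l)
  then show ?case by simp
qed

lemma tmul_eq_sum_superset:
  assumes "finite A" "supp U \<subseteq> A" "finite B" "supp W \<subseteq> B"
  shows "tmul n \<xi> U W t = (\<Sum>s\<in>A. \<Sum>r\<in>B.
      (if (bidx n (fst s) (fst r), bidx n (snd s) (snd r)) = t
       then bcoef \<xi> (fst s) (fst r) * bcoef \<xi> (snd s) (snd r) * U s * W r else 0))"
proof -
  have "tmul n \<xi> U W t = (\<Sum>s\<in>A. \<Sum>r\<in>supp W.
      (if (bidx n (fst s) (fst r), bidx n (snd s) (snd r)) = t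
       then bcoef \<xi> (fst s) (fst r) * bcoef \<xi> (snd s) (snd r) * U s * W r else 0))"
    unfolding tmul_def by (rule sum_supp_superset[OF assms(1,2)]) (intro sum.neutral ballI, simp)
  then show ?thesis
    by (simp only:) (intro sum.cong refl sum_supp_superset[OF assms(3,4)], simp)
qed

lemma hmul_eq_sum_superset:
  assumes "finite A" "supp a \<subseteq> A" "finite B" "supp b \<subseteq> B"
  shows "hmul n \<xi> a b t = (\<Sum>p\<in>A. \<Sum>q\<in>B.
      (if bidx n p q = t then bcoef \<xi> p q * a p * b q else 0))"
proof -
  have "hmul n \<xi> a b t = (\<Sum>p\<in>A. \<Sum>q\<in>supp b.
      (if bidx n p q = t then bcoef \<xi> p q * a p * b q else 0))"
    unfolding hmul_def by (rule sum_supp_superset[OF assms(1,2)]) (intro sum.neutral ballI, simp)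
  then show ?thesis
    by (simp only:) (intro sum.cong refl sum_supp_superset[OF assms(3,4)], simp)
qed

lemma tmul_single:
  "tmul n \<xi> (single s a) (single r c) =
    single (bidx n (fst s) (fst r), bidx n (snd s) (snd r))
      (bcoef \<xi> (fst s) (fst r) * bcoef \<xi> (snd s) (snd r) * a * c)"
  by (rule ext, subst tmul_eq_sum_superset[of "{s}" _ "{r}"]) (auto simp: supp_def single_def)

lemma power_mod_root_of_unity:
  assumes "(\<xi>::'a::monoid_mult) ^ n = 1"
  shows "\<xi> ^ (k mod n) = \<xi> ^ k"
proof -
  have "\<xi> ^ k = (\<xi> ^ n) ^ (k div n) * \<xi> ^ (k mod n)"
    by (simp flip: power_mult power_add)
  then show ?thesis using assms by simp
qed

lemma tpow_Delta_g:
  "0 < n \<Longrightarrow> tpow n \<xi> (Delta_g n) j = single ((j mod n, 0), (j mod n, 0)) (1::'k::field)"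
proof (induction j)
  case (Suc j)
  then show ?case by (simp add: Delta_g_def tmul_single bidx_def bcoef_def mod_Suc_eq)
qed simp

text \<open>The coefficients of \<open>\<Delta>(g\<^sup>j x\<^sup>l) = \<Sum>\<^sub>b [l choose b]\<^sub>q g\<^sup>j x\<^sup>b \<otimes> g\<^sup>j\<^sup>+\<^sup>v\<^sup>b x\<^sup>l\<^sup>-\<^sup>b\<close>
  with \<open>q = \<xi>\<^sup>v\<close>.\<close>

definition coprod_coeff :: "nat \<Rightarrow> nat \<Rightarrow> 'k::field \<Rightarrow> nat \<Rightarrow> nat
    \<Rightarrow> (nat \<times> nat) \<times> (nat \<times> nat) \<Rightarrow> 'k" where
  "coprod_coeff n v q j l = (\<lambda>((a, b), (c, d)).
     if a = j \<and> c = (j + v * b) mod n \<and> b + d = l then qbinom q l b else 0)"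

lemma supp_coprod_coeff:
  "supp (coprod_coeff n v q j l) \<subseteq> (\<lambda>b. ((j, b), ((j + v * b) mod n, l - b))) ` {..l}"
  by (auto simp: supp_def coprod_coeff_def split: if_splits)

lemma tmul_coprod_coeff_Delta_x:
  fixes \<xi> :: "'k::field"
  assumes n: "0 < n" and \<xi>: "\<xi> ^ n = 1"
  shows "tmul n \<xi> (coprod_coeff n v (\<xi> ^ v) 0 l) (Delta_x n v) t
    = (\<Sum>b\<le>l. (if t = ((0, b), ((v * b) mod n, Suc l - b)) then qbinom (\<xi> ^ v) l b else 0)
        + (if t = ((0, Suc b), ((v * Suc b) mod n, l - b)) then (\<xi> ^ v) ^ (l - b) * qbinom (\<xi> ^ v) l b else 0))"
proof -
  let ?q = "\<xi> ^ v"
  let ?\<phi> = "\<lambda>b. ((0::nat, b), ((v * b) mod n, l - b))"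
  let ?B = "{((0::nat, 0::nat), (0::nat, 1::nat)), ((0, 1), (v mod n, 0))}"
  have supp_Delta_x: "supp (Delta_x n v :: _ \<Rightarrow> 'k) \<subseteq> ?B"
    by (auto simp: supp_def Delta_x_def single_def split: if_splits)
  have "((v * b) mod n + v mod n) mod n = (v * Suc b) mod n" for b
    by (simp add: mod_add_eq add.commute)
  moreover have "\<xi> ^ ((l - b) * (v mod n)) = ?q ^ (l - b)" for b
    by (metis power_mod_root_of_unity[OF \<xi>] power_mult mult.commute)
  ultimately have summand: "(\<Sum>r\<in>?B.
      if (bidx n (fst (?\<phi> b)) (fst r), bidx n (snd (?\<phi> b)) (snd r)) = t
      then bcoef \<xi> (fst (?\<phi> b)) (fst r) * bcoef \<xi> (snd (?\<phi> b)) (snd r)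
        * coprod_coeff n v ?q 0 l (?\<phi> b) * Delta_x n v r else 0)
    = (if t = ((0, b), ((v * b) mod n, Suc l - b)) then qbinom ?q l b else 0)
      + (if t = ((0, Suc b), ((v * Suc b) mod n, l - b)) then ?q ^ (l - b) * qbinom ?q l b else 0)"
    if "b \<le> l" for b
    using that n by (auto simp: bidx_def bcoef_def Delta_x_def single_def coprod_coeff_def Suc_diff_le)
  have "tmul n \<xi> (coprod_coeff n v ?q 0 l) (Delta_x n v) t
      = (\<Sum>s\<in>?\<phi> ` {..l}. \<Sum>r\<in>?B.
          if (bidx n (fst s) (fst r), bidx n (snd s) (snd r)) = t
          then bcoef \<xi> (fst s) (fst r) * bcoef \<xi> (snd s) (snd r)
            * coprod_coeff n v ?q 0 l s * Delta_x n v r else 0)"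
    by (rule tmul_eq_sum_superset) (use supp_coprod_coeff[of n v ?q 0 l] supp_Delta_x in auto)
  also have "\<dots> = (\<Sum>b\<le>l. (if t = ((0, b), ((v * b) mod n, Suc l - b)) then qbinom ?q l b else 0)
      + (if t = ((0, Suc b), ((v * Suc b) mod n, l - b)) then ?q ^ (l - b) * qbinom ?q l b else 0))"
    by (subst sum.reindex, simp add: inj_on_def, simp only: o_def)
      (rule sum.cong[OF refl], rule summand, simp)
  finally show ?thesis .
qed

text \<open>The \<open>q\<close>-Pascal rule, read off coefficientwise.\<close>

lemma coprod_coeff_Suc:
  "coprod_coeff n v q 0 (Suc l) t
    = (\<Sum>b\<le>l. (if t = ((0, b), ((v * b) mod n, Suc l - b)) then qbinom q l b else 0)
        + (if t = ((0, Suc b), ((v * Suc b) mod n, l - b)) then q ^ (l - b) * qbinom q l b else 0))"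
proof -
  obtain a B c d where t: "t = ((a, B), (c, d))" by (metis prod.collapse)
  define P where "P \<longleftrightarrow> a = 0 \<and> c = (v * B) mod n \<and> B + d = Suc l"
  have first: "(if t = ((0, b), ((v * b) mod n, Suc l - b)) then qbinom q l b else 0)
      = (if b = B \<and> P then qbinom q l b else 0)" if "b \<in> {..l}" for b
    using that by (auto simp: t P_def)
  have second: "(if t = ((0, Suc b), ((v * Suc b) mod n, l - b)) then q ^ (l - b) * qbinom q l b else 0)
      = (if b = B - 1 \<and> 0 < B \<and> P then q ^ (l - b) * qbinom q l b else 0)" if "b \<in> {..l}" for b
    using that by (cases B) (auto simp: t P_def)
  have "(\<Sum>b\<le>l. (if t = ((0, b), ((v * b) mod n, Suc l - b)) then qbinom q l b else 0)
        + (if t = ((0, Suc b), ((v * Suc b) mod n, l - b)) then q ^ (l - b) * qbinom q l b else 0))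
      = (if B \<le> l \<and> P then qbinom q l B else 0)
        + (if B - 1 \<le> l \<and> 0 < B \<and> P then q ^ (l - (B - 1)) * qbinom q l (B - 1) else 0)"
    unfolding sum.distrib
    by (subst sum.cong[OF refl first] sum.cong[OF refl second], assumption)+ (simp add: sum_delta_conj)
  also have "\<dots> = coprod_coeff n v q 0 (Suc l) t"
    by (cases B) (auto simp: t P_def coprod_coeff_def qbinom_eq_0)
  finally show ?thesis by simp
qed

text \<open>Since \<open>(x \<otimes> g\<^sup>v)(1 \<otimes> x) = q (1 \<otimes> x)(x \<otimes> g\<^sup>v)\<close>, the powers of \<open>\<Delta>(x)\<close>
  obey the \<open>q\<close>-binomial theorem.\<close>

lemma tpow_Delta_x:
  fixes \<xi> :: "'k::field"
  assumes "0 < n" and "\<xi> ^ n = 1"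
  shows "tpow n \<xi> (Delta_x n v) l = coprod_coeff n v (\<xi> ^ v) 0 l"
proof (induction l)
  case (Suc l)
  show ?case
    by (rule ext) (simp only: tpow.simps Suc.IH tmul_coprod_coeff_Delta_x[OF assms] coprod_coeff_Suc)
qed (simp add: fun_eq_iff coprod_coeff_def single_def)

lemma Delta_basis:
  fixes \<xi> :: "'k::field"
  assumes n: "0 < n" and \<xi>: "\<xi> ^ n = 1" and j: "j < n"
  shows "Delta n v \<xi> (j, l) = coprod_coeff n v (\<xi> ^ v) j l"
proof (rule ext, clarify)
  fix a B c d :: nat
  let ?q = "\<xi> ^ v"
  let ?\<phi> = "\<lambda>b. ((0::nat, b), ((v * b) mod n, l - b))"
  have "Delta n v \<xi> (j, l) ((a, B), c, d) = tmul n \<xi> (single ((j, 0), (j, 0)) 1) (coprod_coeff n v ?q 0 l) ((a, B), c, d)"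
    unfolding Delta_def using n \<xi> j by (simp add: tpow_Delta_g tpow_Delta_x)
  also have "\<dots> = (\<Sum>s\<in>{((j, 0), (j, 0))}. \<Sum>r\<in>?\<phi> ` {..l}.
      if (bidx n (fst s) (fst r), bidx n (snd s) (snd r)) = ((a, B), c, d)
      then bcoef \<xi> (fst s) (fst r) * bcoef \<xi> (snd s) (snd r)
        * single ((j, 0), (j, 0)) 1 s * coprod_coeff n v ?q 0 l r else 0)"
    by (rule tmul_eq_sum_superset)
      (use supp_single_subset[of "((j, 0), (j, 0))" 1] supp_coprod_coeff[of n v ?q 0 l] in auto)
  also have "\<dots> = (\<Sum>b\<in>{..l}. if b = B \<and> (a = j \<and> c = (j + v * B) mod n \<and> B + d = l)
      then qbinom ?q l b else 0)"
    by (simp add: sum.reindex inj_on_def, intro sum.cong refl)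
      (use j in \<open>auto simp: bidx_def bcoef_def single_def coprod_coeff_def mod_add_right_eq\<close>)
  also have "\<dots> = coprod_coeff n v ?q j l ((a, B), c, d)"
    by (auto simp: sum_delta_conj coprod_coeff_def)
  finally show "Delta n v \<xi> (j, l) ((a, B), c, d) = coprod_coeff n v ?q j l ((a, B), c, d)" .
qed

lemma conv_basis:
  fixes \<xi> :: "'k::field"
  assumes n: "0 < n" and \<xi>: "\<xi> ^ n = 1" and j: "j < n"
  shows "conv n v \<xi> f h (j, l) = (\<Sum>b\<le>l. qbinom (\<xi> ^ v) l b * f (j, b) * h ((j + v * b) mod n, l - b))"
proof -
  let ?\<phi> = "\<lambda>b. ((j, b), ((j + v * b) mod n, l - b))"
  have "conv n v \<xi> f h (j, l) = (\<Sum>s\<in>?\<phi> ` {..l}. coprod_coeff n v (\<xi> ^ v) j l s * f (fst s) * h (snd s))"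
    unfolding conv_def Delta_basis[OF n \<xi> j] using j
    by (simp add: sum_supp_superset[OF _ supp_coprod_coeff])
  also have "\<dots> = (\<Sum>b\<le>l. qbinom (\<xi> ^ v) l b * f (j, b) * h ((j + v * b) mod n, l - b))"
    by (simp add: sum.reindex inj_on_def coprod_coeff_def)
  finally show ?thesis .
qed

lemma conv_add_right: "conv n v \<xi> f (\<lambda>p. h1 p + h2 p) = (\<lambda>p. conv n v \<xi> f h1 p + conv n v \<xi> f h2 p)"
  by (simp add: conv_def fun_eq_iff sum.distrib algebra_simps)

lemma conv_add_left: "conv n v \<xi> (\<lambda>p. h1 p + h2 p) f = (\<lambda>p. conv n v \<xi> h1 f p + conv n v \<xi> h2 f p)"
  by (simp add: conv_def fun_eq_iff sum.distrib algebra_simps)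

lemma conv_diff_right: "conv n v \<xi> f (\<lambda>p. h1 p - h2 p) = (\<lambda>p. conv n v \<xi> f h1 p - conv n v \<xi> f h2 p)"
  by (simp add: conv_def fun_eq_iff sum_subtractf algebra_simps)

lemma conv_diff_left: "conv n v \<xi> (\<lambda>p. h1 p - h2 p) f = (\<lambda>p. conv n v \<xi> h1 f p - conv n v \<xi> h2 f p)"
  by (simp add: conv_def fun_eq_iff sum_subtractf algebra_simps)

lemma conv_cmult_right: "conv n v \<xi> f (\<lambda>p. c * h p) = (\<lambda>p. c * conv n v \<xi> f h p)"
  by (simp add: conv_def fun_eq_iff sum_distrib_left algebra_simps)

lemma conv_cmult_left: "conv n v \<xi> (\<lambda>p. c * h p) f = (\<lambda>p. c * conv n v \<xi> h f p)"
  by (simp add: conv_def fun_eq_iff sum_distrib_left algebra_simps)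

lemma conv_zero_right: "conv n v \<xi> f (\<lambda>_. 0) = (\<lambda>_. 0)"
  by (simp add: conv_def fun_eq_iff)

lemma conv_zero_left: "conv n v \<xi> (\<lambda>_. 0) f = (\<lambda>_. 0)"
  by (simp add: conv_def fun_eq_iff)

lemma gen_alg_zero: "(\<lambda>_. 0) \<in> gen_alg n v \<xi> G"
  using gen_alg.smult[OF gen_alg.unit, of 0] by simp

lemma gen_alg_sum:
  "finite S \<Longrightarrow> (\<forall>i\<in>S. F i \<in> gen_alg n v \<xi> G) \<Longrightarrow> (\<lambda>p. \<Sum>i\<in>S. F i p) \<in> gen_alg n v \<xi> G"
proof (induction S rule: finite_induct)
  case empty
  then show ?case by (simp add: gen_alg_zero)
next
  case (insert x S)
  then show ?case using gen_alg.add[of "F x" _ _ _ _ "\<lambda>p. \<Sum>i\<in>S. F i p"] by simp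
qed

section \<open>Evaluation of functionals and ideals of \<open>H\<close>\<close>

lemma Hspace_add:
  assumes "a \<in> Hspace n" "b \<in> Hspace n"
  shows "(\<lambda>p. a p + b p) \<in> Hspace n"
proof -
  have "supp (\<lambda>p. a p + b p) \<subseteq> supp a \<union> supp b" by (auto simp: supp_def)
  then show ?thesis using assms by (auto simp: Hspace_def intro: finite_subset)
qed

lemma Hspace_cmult:
  assumes "a \<in> Hspace n"
  shows "(\<lambda>p. c * a p) \<in> Hspace n"
proof -
  have "supp (\<lambda>p. c * a p) \<subseteq> supp a" by (auto simp: supp_def)
  then show ?thesis using assms by (auto simp: Hspace_def intro: finite_subset)
qed

lemma Hspace_zero: "(\<lambda>_. 0) \<in> Hspace n"
  by (simp add: Hspace_def supp_def)

lemma Hspace_single: "fst p < n \<Longrightarrow> single p c \<in> Hspace n"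
  by (cases p) (auto simp: Hspace_def single_def supp_def intro: finite_subset[of _ "{p}"])

lemma Hspace_supp_fst_less:
  assumes "a \<in> Hspace n" "p \<in> supp a"
  shows "fst p < n"
proof (rule ccontr)
  assume "\<not> fst p < n"
  then have "a p = 0" using assms(1) by (cases p) (auto simp: Hspace_def)
  then show False using assms(2) by (simp add: supp_def)
qed

lemma supp_hmul:
  assumes "finite A" "supp a \<subseteq> A" "finite B" "supp b \<subseteq> B"
  shows "supp (hmul n \<xi> a b) \<subseteq> (\<lambda>(p, q). bidx n p q) ` (A \<times> B)"
proof
  fix t assume "t \<in> supp (hmul n \<xi> a b)"
  then have "(\<Sum>p\<in>A. \<Sum>q\<in>B. if bidx n p q = t then bcoef \<xi> p q * a p * b q else 0) \<noteq> 0"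
    by (simp add: supp_def hmul_eq_sum_superset[OF assms])
  then obtain p q where "p \<in> A" "q \<in> B" "bidx n p q = t"
    by (auto elim!: sum.not_neutral_contains_not_neutral split: if_splits)
  then show "t \<in> (\<lambda>(p, q). bidx n p q) ` (A \<times> B)" by force
qed

lemma Hspace_hmul:
  assumes "0 < n" "a \<in> Hspace n" "b \<in> Hspace n"
  shows "hmul n \<xi> a b \<in> Hspace n"
proof -
  have "finite (supp a)" "finite (supp b)" using assms(2,3) by (auto simp: Hspace_def)
  then have "finite (supp (hmul n \<xi> a b))"
    using supp_hmul[of "supp a" a "supp b" b n \<xi>] by (auto intro: finite_subset)
  moreover have "hmul n \<xi> a b (j, l) = 0" if "n \<le> j" for j l
  proof -
    have "bidx n p q \<noteq> (j, l)" for p q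
      using that mod_less_divisor[OF assms(1), of "fst p + fst q"] by (auto simp: bidx_def)
    then show ?thesis by (simp add: hmul_def)
  qed
  ultimately show ?thesis by (simp add: Hspace_def)
qed

lemma evalf_eq_sum_superset: "finite S \<Longrightarrow> supp a \<subseteq> S \<Longrightarrow> evalf f a = (\<Sum>p\<in>S. a p * f p)"
  unfolding evalf_def by (rule sum_supp_superset) simp_all

lemma evalf_hmul:
  assumes A: "finite A" "supp a \<subseteq> A" and B: "finite B" "supp b \<subseteq> B"
  shows "evalf f (hmul n \<xi> a b) = (\<Sum>p\<in>A. \<Sum>q\<in>B. bcoef \<xi> p q * a p * b q * f (bidx n p q))"
proof -
  let ?T = "(\<lambda>(p, q). bidx n p q) ` (A \<times> B)"
  have T: "finite ?T" using A B by simp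
  have "evalf f (hmul n \<xi> a b) = (\<Sum>t\<in>?T. hmul n \<xi> a b t * f t)"
    by (rule evalf_eq_sum_superset[OF T supp_hmul[OF A B]])
  also have "\<dots> = (\<Sum>p\<in>A. \<Sum>q\<in>B. \<Sum>t\<in>?T. if bidx n p q = t then bcoef \<xi> p q * a p * b q * f t else 0)"
    unfolding hmul_eq_sum_superset[OF A B] sum_distrib_right
    by (simp add: sum.swap[of _ ?T] sum.swap[of _ _ B] if_distrib[of "\<lambda>x. x * f _"] cong: if_cong)
  also have "\<dots> = (\<Sum>p\<in>A. \<Sum>q\<in>B. bcoef \<xi> p q * a p * b q * f (bidx n p q))"
    using T by (intro sum.cong refl) (auto simp: sum.delta)
  finally show ?thesis .
qed

lemma evalf_add:
  assumes "a \<in> Hspace n" "b \<in> Hspace n"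
  shows "evalf f (\<lambda>p. a p + b p) = evalf f a + evalf f b"
proof -
  have S: "finite (supp a \<union> supp b)" using assms by (auto simp: Hspace_def)
  have "supp (\<lambda>p. a p + b p) \<subseteq> supp a \<union> supp b" by (auto simp: supp_def)
  then show ?thesis
    by (simp add: evalf_eq_sum_superset[OF S] distrib_right sum.distrib)
qed

lemma evalf_cmult:
  assumes "a \<in> Hspace n"
  shows "evalf f (\<lambda>p. c * a p) = c * evalf f a"
proof -
  have S: "finite (supp a)" using assms by (simp add: Hspace_def)
  have "supp (\<lambda>p. c * a p) \<subseteq> supp a" by (auto simp: supp_def)
  then show ?thesis
    by (simp add: evalf_eq_sum_superset[OF S] sum_distrib_left mult.assoc)
qed

lemma evalf_zero: "evalf f (\<lambda>_. 0) = 0"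
  by (simp add: evalf_def supp_def)

lemma is_ideal_lincomb:
  assumes "is_ideal n \<xi> I" "finite K" "\<forall>k\<in>K. u k \<in> I"
  shows "(\<lambda>p. \<Sum>k\<in>K. d k * u k p) \<in> I"
  using assms(2,3)
proof (induction K rule: finite_induct)
  case empty
  then show ?case using assms(1) by (simp add: is_ideal_def)
next
  case (insert x K)
  then have "(\<lambda>p. d x * u x p) \<in> I" "(\<lambda>p. \<Sum>k\<in>K. d k * u k p) \<in> I"
    using assms(1) by (simp_all add: is_ideal_def)
  then show ?case using assms(1) insert.hyps unfolding is_ideal_def by simp
qed

lemma evalf_single: "evalf f (single p c) = c * f p"
  by (simp add: evalf_eq_sum_superset[OF _ supp_single_subset] single_apply)

lemma evalf_diff_lincomb:
  assumes "finite F" "a \<in> Hspace n" "F \<subseteq> Hspace n"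
  shows "evalf f (\<lambda>x. a x - (\<Sum>h\<in>F. c h * h x)) = evalf f a - (\<Sum>h\<in>F. c h * evalf f h)"
proof -
  define S where "S = supp a \<union> \<Union>(supp ` F)"
  have S: "finite S" using assms by (auto simp: S_def Hspace_def)
  have "supp a \<subseteq> S" "\<And>h. h \<in> F \<Longrightarrow> supp h \<subseteq> S" by (auto simp: S_def)
  moreover have "supp (\<lambda>x. a x - (\<Sum>h\<in>F. c h * h x)) \<subseteq> S"
    by (auto simp: S_def supp_def elim!: sum.not_neutral_contains_not_neutral)
  ultimately show ?thesis
    by (simp add: evalf_eq_sum_superset[OF S] left_diff_distrib sum_subtractf sum_distrib_left
        sum_distrib_right sum.swap[of _ S] mult.assoc)
qed

lemma Hspace_diff_lincomb:
  assumes "finite F" "a \<in> Hspace n" "F \<subseteq> Hspace n"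
  shows "(\<lambda>x. a x - (\<Sum>h\<in>F. c h * h x)) \<in> Hspace n"
proof -
  have "supp (\<lambda>x. a x - (\<Sum>h\<in>F. c h * h x)) \<subseteq> supp a \<union> \<Union>(supp ` F)"
    by (auto simp: supp_def elim!: sum.not_neutral_contains_not_neutral)
  moreover have "finite (supp a \<union> \<Union>(supp ` F))" using assms by (auto simp: Hspace_def)
  moreover have "(\<Sum>h\<in>F. c h * h (j, l)) = 0" if "n \<le> j" for j l
    using assms(3) that by (intro sum.neutral) (auto simp: Hspace_def)
  ultimately show ?thesis using assms(2) unfolding Hspace_def by (simp add: finite_subset)
qed

lemma finite_codim_annihilator:
  assumes B: "finite B" "\<forall>p\<in>B. fst p < n"
    and det: "\<And>p. fst p < n \<Longrightarrow> \<exists>w. \<forall>f\<in>W. f p = (\<Sum>p'\<in>B. w p' * f p')"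
  shows "finite_codim n {a \<in> Hspace n. \<forall>f\<in>W. evalf f a = (0::'k::field)}"
  unfolding finite_codim_def
proof (intro exI[of _ "(\<lambda>p. single p 1) ` B"] conjI ballI)
  let ?F = "(\<lambda>p. single p (1::'k)) ` B"
  show F: "finite ?F" "?F \<subseteq> Hspace n" using B by (auto intro: Hspace_single)
  fix a :: "nat \<times> nat \<Rightarrow> 'k" assume a: "a \<in> Hspace n"
  have "\<forall>p\<in>supp a. \<exists>w. \<forall>f\<in>W. f p = (\<Sum>p'\<in>B. w p' * f p')"
    using det Hspace_supp_fst_less[OF a] by blast
  then obtain w where w: "\<And>p f. p \<in> supp a \<Longrightarrow> f \<in> W \<Longrightarrow> f p = (\<Sum>p'\<in>B. w p p' * f p')"
    by metis
  define c where "c h = (\<Sum>p\<in>supp a. a p * (\<Sum>p'\<in>B. w p p' * h p'))" for h :: "nat \<times> nat \<Rightarrow> 'k"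
  have inj: "inj_on (\<lambda>p. single p (1::'k)) B"
    by (rule inj_onI) (metis single_apply one_neq_zero)
  have c_single: "c (single p' 1) = (\<Sum>p\<in>supp a. a p * w p p')" if "p' \<in> B" for p'
    unfolding c_def using that B(1) by (simp add: single_apply if_distrib[of "\<lambda>x. _ * x"] sum.delta' cong: if_cong)
  have "evalf f (\<lambda>x. a x - (\<Sum>h\<in>?F. c h * h x)) = 0" if f: "f \<in> W" for f
  proof -
    have "evalf f (\<lambda>x. a x - (\<Sum>h\<in>?F. c h * h x)) = evalf f a - (\<Sum>p'\<in>B. c (single p' 1) * f p')"
      using evalf_diff_lincomb[OF F(1) a F(2)] by (simp add: sum.reindex[OF inj] evalf_single)
    also have "\<dots> = (\<Sum>p\<in>supp a. a p * (f p - (\<Sum>p'\<in>B. w p p' * f p')))"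
      by (simp add: c_single evalf_def sum_distrib_left sum_distrib_right sum_subtractf right_diff_distrib
          sum.swap[of _ B] mult.assoc)
    also have "\<dots> = 0" using w f by simp
    finally show ?thesis .
  qed
  then show "\<exists>c. (\<lambda>p. a p - (\<Sum>h\<in>?F. c h * h p)) \<in> {a \<in> Hspace n. \<forall>f\<in>W. evalf f a = 0}"
    using Hspace_diff_lincomb[OF F(1) a F(2)] by blast
qed

lemma finite_codim_ideal_nontrivial_lincomb:
  fixes y :: "nat \<Rightarrow> nat \<times> nat \<Rightarrow> 'k::field"
  assumes I: "is_ideal n \<xi> I" "finite_codim n I" and y: "\<And>k. y k \<in> Hspace n"
  shows "\<exists>N d. (\<exists>k\<le>N. d k \<noteq> 0) \<and> (\<lambda>p. \<Sum>k\<le>N. d k * y k p) \<in> I"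
proof -
  obtain F where F: "finite F" "\<forall>a\<in>Hspace n. \<exists>c. (\<lambda>p. a p - (\<Sum>h\<in>F. c h * h p)) \<in> I"
    using I(2) by (auto simp: finite_codim_def)
  then have "\<forall>k. \<exists>c. (\<lambda>p. y k p - (\<Sum>h\<in>F. c h * h p)) \<in> I" using y by blast
  then obtain C where C: "\<And>k. (\<lambda>p. y k p - (\<Sum>h\<in>F. C k h * h p)) \<in> I"
    using choice[of "\<lambda>k c. (\<lambda>p. y k p - (\<Sum>h\<in>F. c h * h p)) \<in> I"] by blast
  obtain d where d: "\<exists>k\<in>{..card F}. d k \<noteq> 0" "\<forall>h\<in>F. (\<Sum>k\<le>card F. d k * C k h) = 0"
    using underdetermined_homogeneous_system[OF F(1), of "{..card F}" C] by auto
  have "(\<lambda>p. \<Sum>k\<le>card F. d k * (y k p - (\<Sum>h\<in>F. C k h * h p))) \<in> I"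
    using C by (intro is_ideal_lincomb[OF I(1)]) auto
  moreover have "(\<Sum>k\<le>card F. d k * (\<Sum>h\<in>F. C k h * h p)) = 0" for p
    using d(2) by (simp add: sum_distrib_left sum.swap[of _ F] mult.assoc[symmetric] flip: sum_distrib_right)
  ultimately have "(\<lambda>p. \<Sum>k\<le>card F. d k * y k p) \<in> I"
    by (simp add: right_diff_distrib sum_subtractf)
  then show ?thesis using d(1) by (intro exI[of _ "card F"] exI[of _ d]) auto
qed

lemma evalf_hmul_single_lincomb:
  assumes "0 < n" "j < n" "0 < s"
  shows "evalf f (hmul n \<xi> (single (j, l) 1) (\<lambda>p. \<Sum>k\<le>N. d k * single (0, s * k) 1 p))
    = (\<Sum>k\<le>N. d k * f (j, l + s * k))"
proof -
  let ?z = "\<lambda>p. \<Sum>k\<le>N. d k * single (0, s * k) 1 p"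
  have inj: "inj_on (\<lambda>k. (0::nat, s * k)) {..N}" using assms(3) by (auto simp: inj_on_def)
  have z: "?z (0, s * k) = d k" if "k \<le> N" for k
  proof -
    have "?z (0, s * k) = (\<Sum>k'\<le>N. if k = k' then d k' else 0)"
      using assms(3) by (intro sum.cong) (auto simp: single_apply)
    then show ?thesis using that by simp
  qed
  have "supp ?z \<subseteq> (\<lambda>k. (0, s * k)) ` {..N}"
    by (auto simp: supp_def single_apply elim!: sum.not_neutral_contains_not_neutral split: if_splits)
  then have "evalf f (hmul n \<xi> (single (j, l) 1) ?z)
      = (\<Sum>q\<in>(\<lambda>k. (0, s * k)) ` {..N}. bcoef \<xi> (j, l) q * ?z q * f (bidx n (j, l) q))"
    by (subst evalf_hmul[OF _ supp_single_subset]) (simp_all add: single_apply)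
  also have "\<dots> = (\<Sum>k\<le>N. d k * f (j, l + s * k))"
    using assms(2) by (simp add: sum.reindex[OF inj] z bcoef_def bidx_def)
  finally show ?thesis .
qed

section \<open>Linearly recursive functionals\<close>

locale T_inf =
  fixes n v :: nat and \<xi> :: "'k::field_char_0"
  assumes n_pos: "0 < n" and root: "\<xi> ^ n = 1"
    and primitive: "\<forall>k. 0 < k \<and> k < n \<longrightarrow> \<xi> ^ k \<noteq> 1"
begin

abbreviation "m \<equiv> n div gcd n v"
abbreviation "q \<equiv> \<xi> ^ v"

lemma m_pos: "0 < m"
  using n_pos by (simp add: div_greater_zero_iff gcd_le1_nat)

lemma v_mult_m: "v * m = (v div gcd n v) * n"
  by (simp add: div_mult_swap dvd_div_mult)

lemma mod_add_v_mult_m: "(j + v * (b + m)) mod n = (j + v * b) mod n"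
  by (simp add: distrib_left v_mult_m add.assoc[symmetric])

lemma root_power_eq_1_dvd: "\<xi> ^ k = 1 \<Longrightarrow> n dvd k"
  using primitive power_mod_root_of_unity[OF root, of k] mod_less_divisor[OF n_pos, of k]
  by (auto simp: dvd_eq_mod_eq_0)

lemma q_power_m: "q ^ m = 1"
proof -
  have "q ^ m = (\<xi> ^ n) ^ (v div gcd n v)" by (simp add: v_mult_m mult.commute flip: power_mult)
  then show ?thesis using root by simp
qed

lemma q_power_eq_1_dvd: "q ^ k = 1 \<Longrightarrow> m dvd k"
proof -
  assume "q ^ k = 1"
  then have "n dvd v * k" by (simp add: root_power_eq_1_dvd flip: power_mult)
  moreover have "n = m * gcd n v" "v = (v div gcd n v) * gcd n v" by simp_all
  ultimately have "m * gcd n v dvd ((v div gcd n v) * k) * gcd n v"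
    by (metis mult.assoc mult.commute)
  then have "m dvd (v div gcd n v) * k"
    using n_pos by (subst (asm) dvd_times_right_cancel_iff) simp_all
  moreover have "coprime m (v div gcd n v)" using div_gcd_coprime[of n v] n_pos by simp
  ultimately show "m dvd k" by (simp add: coprime_dvd_mult_right_iff)
qed

lemma q_primitive: "\<forall>k. 0 < k \<and> k < m \<longrightarrow> q ^ k \<noteq> 1"
  using q_power_eq_1_dvd by (meson dvd_imp_le not_le)

lemma qbinom_add_m: "qbinom q (l + m) b = qbinom q l b + (if m \<le> b then qbinom q l (b - m) else 0)"
  by (rule qbinom_add_root_of_unity[OF m_pos q_power_m q_primitive])

lemma qbinom_mult_m: "qbinom q (m * a + m) (m * a) = of_nat (Suc a)"
  by (rule qbinom_mult_root_of_unity[OF m_pos q_power_m q_primitive])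

lemma conv_at:
  "j < n \<Longrightarrow> conv n v \<xi> f h (j, l) = (\<Sum>b\<le>l. qbinom q l b * f (j, b) * h ((j + v * b) mod n, l - b))"
  by (rule conv_basis[OF n_pos root])

definition normalised :: "(nat \<times> nat \<Rightarrow> 'k) \<Rightarrow> bool" where
  "normalised f \<longleftrightarrow> (\<forall>j l. n \<le> j \<longrightarrow> f (j, l) = 0)"

definition annihilated :: "'k poly \<Rightarrow> (nat \<times> nat \<Rightarrow> 'k) \<Rightarrow> bool" where
  "annihilated P f \<longleftrightarrow> (\<forall>j<n. \<forall>l. poly_shift m P (\<lambda>l. f (j, l)) l = 0)"

definition linrec_funs :: "(nat \<times> nat \<Rightarrow> 'k) set" where
  "linrec_funs = {f. normalised f \<and> (\<exists>P. P \<noteq> 0 \<and> annihilated P f)}"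

definition column_fun :: "nat \<Rightarrow> nat \<Rightarrow> (nat \<Rightarrow> 'k) \<Rightarrow> (nat \<times> nat \<Rightarrow> 'k)" where
  "column_fun j r s = (\<lambda>(i, l). if i = j \<and> i < n \<and> l mod m = r then s (l div m) else 0)"

inductive_set exp_poly_funs :: "(nat \<times> nat \<Rightarrow> 'k) set" where
  column_fun: "j < n \<Longrightarrow> r < m \<Longrightarrow> column_fun j r (binom_geom t \<mu>) \<in> exp_poly_funs"
| zero: "(\<lambda>_. 0) \<in> exp_poly_funs"
| add: "f \<in> exp_poly_funs \<Longrightarrow> h \<in> exp_poly_funs \<Longrightarrow> (\<lambda>p. f p + h p) \<in> exp_poly_funs"
| cmult: "f \<in> exp_poly_funs \<Longrightarrow> (\<lambda>p. c * f p) \<in> exp_poly_funs"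

lemma column_fun_in_exp_poly_funs:
  "s \<in> exp_poly_seqs \<Longrightarrow> j < n \<Longrightarrow> r < m \<Longrightarrow> column_fun j r s \<in> exp_poly_funs"
proof (induction rule: exp_poly_seqs.induct)
  case (binom_geom t \<mu>)
  then show ?case by (rule exp_poly_funs.column_fun)
next
  case zero
  have "column_fun j r (\<lambda>_. 0) = (\<lambda>_. 0)" by (auto simp: column_fun_def fun_eq_iff)
  then show ?case using exp_poly_funs.zero by simp
next
  case (add s u)
  have "column_fun j r (\<lambda>a. s a + u a) = (\<lambda>p. column_fun j r s p + column_fun j r u p)"
    by (auto simp: column_fun_def fun_eq_iff)
  then show ?case using add exp_poly_funs.add by simp
next
  case (cmult s c)
  have "column_fun j r (\<lambda>a. c * s a) = (\<lambda>p. c * column_fun j r s p)"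
    by (auto simp: column_fun_def fun_eq_iff)
  then show ?case using cmult exp_poly_funs.cmult by simp
qed

lemma exp_poly_funs_sum:
  "finite S \<Longrightarrow> (\<forall>i\<in>S. F i \<in> exp_poly_funs) \<Longrightarrow> (\<lambda>p. \<Sum>i\<in>S. F i p) \<in> exp_poly_funs"
proof (induction S rule: finite_induct)
  case empty
  then show ?case by (simp add: exp_poly_funs.zero)
next
  case (insert x S)
  then show ?case using exp_poly_funs.add[of "F x" "\<lambda>p. \<Sum>i\<in>S. F i p"] by simp
qed

lemma normalised_eq_sum_column_funs:
  assumes "normalised f"
  shows "f = (\<lambda>p. \<Sum>j<n. \<Sum>r<m. column_fun j r (\<lambda>a. f (j, m * a + r)) p)"
proof (rule ext, clarify)
  fix i l
  have "(\<Sum>r<m. column_fun j r (\<lambda>a. f (j, m * a + r)) (i, l)) = (if j = i \<and> i < n then f (i, l) else 0)" for j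
  proof -
    have "(\<Sum>r<m. column_fun j r (\<lambda>a. f (j, m * a + r)) (i, l))
        = (\<Sum>r<m. if r = l mod m \<and> (j = i \<and> i < n) then f (i, m * (l div m) + r) else 0)"
      by (rule sum.cong) (auto simp: column_fun_def)
    then show ?thesis using m_pos by (simp add: sum_delta_conj)
  qed
  then show "f (i, l) = (\<Sum>j<n. \<Sum>r<m. column_fun j r (\<lambda>a. f (j, m * a + r)) (i, l))"
    using assms by (simp add: sum_delta_conj normalised_def not_less)
qed

lemma poly_shift_residue_class:
  "poly_shift 1 P (\<lambda>a. s (m * a + r)) a = poly_shift m P s (m * a + r)"
  unfolding poly_shift_def by (rule sum.cong) (simp_all add: algebra_simps)

lemma linrec_funs_subset_exp_poly_funs:
  assumes "alg_closed_field TYPE('k)"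
  shows "linrec_funs \<subseteq> exp_poly_funs"
proof
  fix f assume "f \<in> linrec_funs"
  then obtain P where P: "P \<noteq> 0" "annihilated P f" and f: "normalised f"
    by (auto simp: linrec_funs_def)
  have "column_fun j r (\<lambda>a. f (j, m * a + r)) \<in> exp_poly_funs" if "j < n" "r < m" for j r
  proof -
    have "(\<lambda>a. f (j, m * a + r)) \<in> exp_poly_seqs"
      by (rule linear_recurrence_exp_poly_seqs[OF assms P(1)])
        (use P(2) that poly_shift_residue_class[of P "\<lambda>l. f (j, l)" r] in \<open>simp add: annihilated_def\<close>)
    then show ?thesis using that by (rule column_fun_in_exp_poly_funs)
  qed
  then have "(\<lambda>p. \<Sum>j<n. \<Sum>r<m. column_fun j r (\<lambda>a. f (j, m * a + r)) p) \<in> exp_poly_funs"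
    by (auto intro!: exp_poly_funs_sum)
  then show "f \<in> exp_poly_funs" using normalised_eq_sum_column_funs[OF f] by simp
qed

section \<open>Products of linearly recursive functionals\<close>

lemma conv_normalised: "normalised (conv n v \<xi> f h)"
  by (simp add: conv_def normalised_def)

definition shift_m :: "(nat \<times> nat \<Rightarrow> 'k) \<Rightarrow> (nat \<times> nat \<Rightarrow> 'k)" where
  "shift_m f = (\<lambda>(j, l). f (j, l + m))"

definition diff_op :: "'k \<Rightarrow> (nat \<times> nat \<Rightarrow> 'k) \<Rightarrow> (nat \<times> nat \<Rightarrow> 'k)" where
  "diff_op \<mu> f = (\<lambda>p. shift_m f p - \<mu> * f p)"

text \<open>Shifting by \<open>m\<close> is a derivation of the convolution: by \<open>qbinom_add_m\<close> the
  element \<open>x\<^sup>m\<close> is primitive, \<open>\<Delta>(x\<^sup>m) = 1 \<otimes> x\<^sup>m + x\<^sup>m \<otimes> 1\<close>.\<close>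

lemma shift_m_conv:
  "shift_m (conv n v \<xi> f h) = (\<lambda>p. conv n v \<xi> f (shift_m h) p + conv n v \<xi> (shift_m f) h p)"
proof (rule ext, clarify)
  fix j l
  show "shift_m (conv n v \<xi> f h) (j, l) = conv n v \<xi> f (shift_m h) (j, l) + conv n v \<xi> (shift_m f) h (j, l)"
  proof (cases "j < n")
    case False
    then show ?thesis by (simp add: shift_m_def conv_def)
  next
    case j: True
    let ?F = "\<lambda>b. f (j, b) * h ((j + v * b) mod n, l + m - b)"
    have "shift_m (conv n v \<xi> f h) (j, l) = (\<Sum>b\<le>l + m. qbinom q (l + m) b * ?F b)"
      by (simp add: shift_m_def conv_at[OF j] mult.assoc)
    also have "\<dots> = (\<Sum>b\<le>l + m. qbinom q l b * ?F b)
        + (\<Sum>b\<le>l + m. if m \<le> b then qbinom q l (b - m) * ?F (b - m + m) else 0)"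
      unfolding sum.distrib[symmetric] by (rule sum.cong) (auto simp: qbinom_add_m distrib_right)
    also have "(\<Sum>b\<le>l + m. qbinom q l b * ?F b) = (\<Sum>b\<le>l. qbinom q l b * ?F b)"
      by (rule sum.mono_neutral_right) (auto simp: qbinom_eq_0)
    also have "\<dots> = conv n v \<xi> f (shift_m h) (j, l)"
      by (auto simp: shift_m_def conv_at[OF j] mult.assoc intro!: sum.cong)
    also have "(\<Sum>b\<le>l + m. if m \<le> b then qbinom q l (b - m) * ?F (b - m + m) else 0)
        = (\<Sum>b\<le>l. qbinom q l b * ?F (b + m))"
      by (rule sum_atMost_add_shift[where G = "\<lambda>c. qbinom q l c * ?F (c + m)"])
    also have "\<dots> = conv n v \<xi> (shift_m f) h (j, l)"
      by (simp add: shift_m_def conv_at[OF j] mult.assoc mod_add_v_mult_m)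
    finally show ?thesis .
  qed
qed

lemma diff_op_conv:
  "diff_op (\<mu>1 + \<mu>2) (conv n v \<xi> f h) = (\<lambda>p. conv n v \<xi> f (diff_op \<mu>2 h) p + conv n v \<xi> (diff_op \<mu>1 f) h p)"
  unfolding diff_op_def shift_m_conv conv_diff_right conv_diff_left conv_cmult_right conv_cmult_left
  by (simp add: fun_eq_iff algebra_simps)

lemma diff_op_apply: "diff_op \<mu> f (j, l) = f (j, l + m) - \<mu> * f (j, l)"
  by (simp add: diff_op_def shift_m_def)

lemma diff_op_add: "diff_op \<mu> (\<lambda>p. f p + h p) = (\<lambda>p. diff_op \<mu> f p + diff_op \<mu> h p)"
  by (simp add: diff_op_def shift_m_def fun_eq_iff algebra_simps)

lemma diff_op_pow_add:
  "(diff_op \<mu> ^^ e) (\<lambda>p. f p + h p) = (\<lambda>p. (diff_op \<mu> ^^ e) f p + (diff_op \<mu> ^^ e) h p)"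
  by (induction e) (simp_all add: diff_op_add)

lemma diff_op_pow_zero: "(diff_op \<mu> ^^ e) (\<lambda>_. 0) = (\<lambda>_. 0)"
  by (induction e) (simp_all add: diff_op_def shift_m_def fun_eq_iff)

lemma diff_op_pow_conv:
  assumes "(diff_op \<mu>1 ^^ e1) f = (\<lambda>_. 0)" and "(diff_op \<mu>2 ^^ e2) h = (\<lambda>_. 0)"
  shows "(diff_op (\<mu>1 + \<mu>2) ^^ (e1 + e2)) (conv n v \<xi> f h) = (\<lambda>_. 0)"
  using assms
proof (induction "e1 + e2" arbitrary: e1 e2 f h rule: less_induct)
  case less
  consider "e1 = 0" | "e2 = 0" | a1 a2 where "e1 = Suc a1" "e2 = Suc a2"
    by (meson not0_implies_Suc)
  then show ?case
  proof cases
    case 1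
    then show ?thesis using less.prems(1) by (simp add: conv_zero_left diff_op_pow_zero)
  next
    case 2
    then show ?thesis using less.prems(2) by (simp add: conv_zero_right diff_op_pow_zero)
  next
    case 3
    have "(diff_op \<mu>1 ^^ a1) (diff_op \<mu>1 f) = (\<lambda>_. 0)" "(diff_op \<mu>2 ^^ a2) (diff_op \<mu>2 h) = (\<lambda>_. 0)"
      using less.prems 3 by (simp_all add: funpow_Suc_right del: funpow.simps)
    then have "(diff_op (\<mu>1 + \<mu>2) ^^ (e1 + a2)) (conv n v \<xi> f (diff_op \<mu>2 h)) = (\<lambda>_. 0)"
      and "(diff_op (\<mu>1 + \<mu>2) ^^ (a1 + e2)) (conv n v \<xi> (diff_op \<mu>1 f) h) = (\<lambda>_. 0)"
      using less.hyps[of e1 a2 f "diff_op \<mu>2 h"] less.hyps[of a1 e2 "diff_op \<mu>1 f" h] less.prems 3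
      by (simp_all del: funpow.simps)
    moreover have "e1 + e2 = Suc (e1 + a2)" "e1 + a2 = a1 + e2" using 3 by simp_all
    ultimately show ?thesis
      by (simp only: funpow_Suc_right o_apply diff_op_conv diff_op_pow_add) simp
  qed
qed

lemma shift_m_column_fun: "shift_m (column_fun j r s) = column_fun j r (\<lambda>a. s (Suc a))"
  using m_pos by (simp add: shift_m_def column_fun_def fun_eq_iff)

lemma diff_op_column_fun: "diff_op \<mu> (column_fun j r s) = column_fun j r (\<lambda>a. s (Suc a) - \<mu> * s a)"
  unfolding diff_op_def shift_m_column_fun by (simp add: column_fun_def fun_eq_iff)

lemma diff_op_pow_column_fun: "(diff_op \<mu> ^^ Suc t) (column_fun j r (binom_geom t \<mu>)) = (\<lambda>_. 0)"
proof (induction t)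
  case 0
  have "diff_op \<mu> (column_fun j r (binom_geom 0 \<mu>)) = column_fun j r (\<lambda>_. 0)"
    by (simp add: diff_op_column_fun binom_geom_0_Suc)
  then show ?case by (simp add: column_fun_def fun_eq_iff)
next
  case (Suc t)
  have "diff_op \<mu> (column_fun j r (binom_geom (Suc t) \<mu>)) = column_fun j r (binom_geom t \<mu>)"
    by (simp add: diff_op_column_fun binom_geom_Suc_Suc)
  then show ?case using Suc by (simp add: funpow_Suc_right del: funpow.simps)
qed

lemma diff_op_pow_eq_poly_shift:
  "j < n \<Longrightarrow> (\<lambda>l. (diff_op \<mu> ^^ e) f (j, l)) = poly_shift m ([:-\<mu>, 1:] ^ e) (\<lambda>l. f (j, l))"
proof (induction e)
  case 0
  then show ?case by (simp add: poly_shift_def fun_eq_iff)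
next
  case (Suc e)
  have "poly_shift m ([:-\<mu>, 1:] ^ Suc e) (\<lambda>l. f (j, l))
      = poly_shift m [:-\<mu>, 1:] (\<lambda>l. (diff_op \<mu> ^^ e) f (j, l))"
    by (simp only: power_Suc poly_shift_mult Suc)
  then show ?case by (simp add: fun_eq_iff poly_shift_linear diff_op_apply)
qed

lemma annihilated_diff_op_pow:
  "(diff_op \<mu> ^^ e) f = (\<lambda>_. 0) \<Longrightarrow> annihilated ([:-\<mu>, 1:] ^ e) f"
  unfolding annihilated_def using diff_op_pow_eq_poly_shift by (metis (mono_tags))

lemma linrec_funs_add:
  assumes "f \<in> linrec_funs" "h \<in> linrec_funs"
  shows "(\<lambda>p. f p + h p) \<in> linrec_funs"
proof -
  obtain P Q where PQ: "P \<noteq> 0" "annihilated P f" "Q \<noteq> 0" "annihilated Q h"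
    using assms by (auto simp: linrec_funs_def)
  have "annihilated (P * Q) (\<lambda>p. f p + h p)"
    unfolding annihilated_def
  proof (intro allI impI)
    fix j l assume "j < n"
    then have "poly_shift m (P * Q) (\<lambda>l. f (j, l)) l = 0" "poly_shift m (P * Q) (\<lambda>l. h (j, l)) l = 0"
      using PQ by (auto simp: annihilated_def intro: poly_shift_dvd[of P] poly_shift_dvd[of Q])
    then show "poly_shift m (P * Q) (\<lambda>l. f (j, l) + h (j, l)) l = 0"
      by (simp add: poly_shift_add_seq)
  qed
  then show ?thesis
    using assms PQ by (auto simp: linrec_funs_def normalised_def intro!: exI[of _ "P * Q"])
qed

lemma linrec_funs_cmult: "f \<in> linrec_funs \<Longrightarrow> (\<lambda>p. c * f p) \<in> linrec_funs"
  by (auto simp: linrec_funs_def normalised_def annihilated_def poly_shift_cmult_seq)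

lemma linrec_funs_zero: "(\<lambda>_. 0) \<in> linrec_funs"
  by (auto simp: linrec_funs_def normalised_def annihilated_def poly_shift_zero_seq intro!: exI[of _ 1])

lemma conv_column_funs_linrec:
  "conv n v \<xi> (column_fun j1 r1 (binom_geom t1 \<mu>1)) (column_fun j2 r2 (binom_geom t2 \<mu>2)) \<in> linrec_funs"
proof -
  have "annihilated ([:-(\<mu>1 + \<mu>2), 1:] ^ (Suc t1 + Suc t2))
      (conv n v \<xi> (column_fun j1 r1 (binom_geom t1 \<mu>1)) (column_fun j2 r2 (binom_geom t2 \<mu>2)))"
    by (intro annihilated_diff_op_pow diff_op_pow_conv diff_op_pow_column_fun)
  moreover have "[:-(\<mu>1 + \<mu>2), 1:] ^ (Suc t1 + Suc t2) \<noteq> 0" by (intro power_not_zero) simp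
  ultimately show ?thesis using conv_normalised by (auto simp: linrec_funs_def)
qed

lemma conv_exp_poly_funs_linrec:
  "f \<in> exp_poly_funs \<Longrightarrow> h \<in> exp_poly_funs \<Longrightarrow> conv n v \<xi> f h \<in> linrec_funs"
proof (induction f rule: exp_poly_funs.induct)
  case (column_fun j r t \<mu>)
  show ?case using column_fun(3)
  proof (induction h rule: exp_poly_funs.induct)
    case column_fun
    show ?case by (rule conv_column_funs_linrec)
  qed (simp_all add: conv_zero_right conv_add_right conv_cmult_right
      linrec_funs_zero linrec_funs_add linrec_funs_cmult)
qed (simp_all add: conv_zero_left conv_add_left conv_cmult_left
    linrec_funs_zero linrec_funs_add linrec_funs_cmult)

section \<open>The subalgebra generated by \<open>\<psi>\<^sub>\<lambda>\<close>, \<open>\<omega>\<close>, \<open>E\<^sub>1\<close>, \<open>E\<^sub>2\<close>\<close>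

abbreviation gen_algebra :: "(nat \<times> nat \<Rightarrow> 'k) set" where
  "gen_algebra \<equiv> gen_alg n v \<xi> (range (psi n v) \<union> {omega n \<xi>, E2 n v, E1 n})"

lemma conv_omega_at: "j < n \<Longrightarrow> conv n v \<xi> (omega n \<xi>) u (j, l) = \<xi> ^ j * u (j, l)"
proof -
  assume j: "j < n"
  have "conv n v \<xi> (omega n \<xi>) u (j, l)
      = (\<Sum>b\<le>l. if b = 0 then \<xi> ^ j * u (j, l) else 0)"
    unfolding conv_at[OF j] by (rule sum.cong) (auto simp: omega_def j)
  then show ?thesis by simp
qed

lemma conv_omega_pow_at:
  "normalised u \<Longrightarrow> (conv n v \<xi> (omega n \<xi>) ^^ k) u (j, l) = \<xi> ^ (k * j) * u (j, l)"
proof (induction k arbitrary: j l)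
  case (Suc k)
  show ?case
  proof (cases "j < n")
    case True
    then show ?thesis using Suc by (simp add: conv_omega_at power_add mult.commute mult.left_commute)
  next
    case False
    then show ?thesis using Suc.prems by (simp add: conv_def normalised_def)
  qed
qed simp

lemma roots_of_unity_orthogonal:
  assumes "i < n" "j < n"
  shows "(\<Sum>k<n. \<xi> ^ (k * (n - i)) * \<xi> ^ (k * j)) = (if j = i then of_nat n else 0)"
proof -
  let ?z = "\<xi> ^ (n - i + j)"
  have "(\<Sum>k<n. \<xi> ^ (k * (n - i)) * \<xi> ^ (k * j)) = qint ?z n"
    by (simp add: qint_def algebra_simps flip: power_add power_mult)
  moreover have "?z ^ n = 1"
    by (metis mult.commute power_mult power_one root)
  moreover have "?z = 1 \<longleftrightarrow> j = i"
  proof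
    assume "?z = 1"
    then obtain c where c: "n - i + j = n * c" using root_power_eq_1_dvd by blast
    with assms have "0 < n * c" "n * c < n * 2" by linarith+
    then have "c = 1" by simp
    then show "j = i" using c assms by simp
  qed (use assms root in simp)
  ultimately show ?thesis using qint_eq_0_root_of_unity[of ?z n] by (auto simp: qint_def)
qed

lemma gen_algebra_conv_omega_pow: "u \<in> gen_algebra \<Longrightarrow> (conv n v \<xi> (omega n \<xi>) ^^ k) u \<in> gen_algebra"
  by (induction k) (auto intro: gen_alg.mult gen_alg.gen)

text \<open>Restriction to the column \<open>g\<^sup>i x\<^sup>*\<close> is the discrete Fourier projection
  \<open>n\<^sup>-\<^sup>1 \<Sum>\<^sub>k \<xi>\<^sup>-\<^sup>k\<^sup>i \<omega>\<^sup>k\<close>, as \<open>\<omega>\<close> acts on column \<open>j\<close> by \<open>\<xi>\<^sup>j\<close>.\<close>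

lemma gen_algebra_restrict_column:
  assumes u: "u \<in> gen_algebra" "normalised u" and i: "i < n"
  shows "(\<lambda>p. if fst p = i then u p else 0) \<in> gen_algebra"
proof -
  let ?w = "\<lambda>p. inverse (of_nat n) * (\<Sum>k<n. \<xi> ^ (k * (n - i)) * (conv n v \<xi> (omega n \<xi>) ^^ k) u p)"
  have "?w \<in> gen_algebra"
    by (intro gen_alg.smult gen_alg_sum ballI finite_lessThan gen_algebra_conv_omega_pow u(1))
  moreover have "?w = (\<lambda>p. if fst p = i then u p else 0)"
  proof (rule ext, clarify)
    fix j l
    show "?w (j, l) = (if fst (j, l) = i then u (j, l) else 0)"
    proof (cases "j < n")
      case True
      have "?w (j, l) = inverse (of_nat n) * (\<Sum>k<n. \<xi> ^ (k * (n - i)) * \<xi> ^ (k * j)) * u (j, l)"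
        by (simp add: conv_omega_pow_at[OF u(2)] sum_distrib_right mult.assoc)
      then show ?thesis using True i n_pos by (simp add: roots_of_unity_orthogonal)
    next
      case False
      then show ?thesis using u(2) i by (auto simp: normalised_def conv_omega_pow_at)
    qed
  qed
  ultimately show ?thesis by simp
qed

definition residue_fun :: "nat \<Rightarrow> (nat \<Rightarrow> 'k) \<Rightarrow> (nat \<times> nat \<Rightarrow> 'k)" where
  "residue_fun r s = (\<lambda>(j, l). if j < n \<and> l mod m = r then s (l div m) else 0)"

lemma normalised_residue_fun: "normalised (residue_fun r s)"
  by (simp add: normalised_def residue_fun_def)

lemma psi_eq_residue_fun: "psi n v c = residue_fun 0 (binom_geom 0 c)"
  unfolding psi_def residue_fun_def binom_geom_def Let_def dvd_eq_mod_eq_0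
  by (simp only: binomial_n_0 diff_zero of_nat_1 mult_1)

lemma conv_degree_indicator:
  assumes j: "j < n" and e: "\<And>j' l'. e (j', l') = (if j' < n \<and> l' = L then 1 else 0)"
  shows "conv n v \<xi> u e (j, l) = (if L \<le> l then qbinom q l (l - L) * u (j, l - L) else 0)"
proof -
  have "conv n v \<xi> u e (j, l) = (\<Sum>b\<le>l. if b = l - L \<and> L \<le> l then qbinom q l b * u (j, b) else 0)"
    unfolding conv_at[OF j] by (rule sum.cong) (auto simp: e n_pos)
  then show ?thesis by (simp add: sum_delta_conj)
qed

lemma conv_residue_fun_E2:
  "conv n v \<xi> (residue_fun 0 (binom_geom t \<mu>)) (E2 n v)
    = (\<lambda>p. of_nat (Suc t) * residue_fun 0 (binom_geom (Suc t) \<mu>) p)"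
proof (rule ext, clarify)
  fix j l
  show "conv n v \<xi> (residue_fun 0 (binom_geom t \<mu>)) (E2 n v) (j, l)
      = of_nat (Suc t) * residue_fun 0 (binom_geom (Suc t) \<mu>) (j, l)"
  proof (cases "j < n")
    case False
    then show ?thesis by (simp add: conv_def residue_fun_def)
  next
    case j: True
    have conv: "conv n v \<xi> (residue_fun 0 (binom_geom t \<mu>)) (E2 n v) (j, l)
        = (if m \<le> l then qbinom q l (l - m) * residue_fun 0 (binom_geom t \<mu>) (j, l - m) else 0)"
      by (rule conv_degree_indicator[OF j]) (simp add: E2_def)
    obtain a r where l: "l = m * a + r" "r < m"
      using m_pos by (intro that[of "l div m" "l mod m"]) simp_all
    consider "r \<noteq> 0" | "r = 0" "a = 0" | a' where "r = 0" "a = Suc a'"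
      by (cases a) auto
    then show ?thesis
    proof cases
      case 1
      have "l mod m = r" "m \<le> l \<Longrightarrow> (l - m) mod m = r"
        using l by (simp_all flip: le_mod_geq)
      then show ?thesis unfolding conv using 1 by (simp add: residue_fun_def)
    next
      case 2
      then show ?thesis unfolding conv using l m_pos by (simp add: residue_fun_def binom_geom_def)
    next
      case 3
      then have l': "l = m * a' + m" using l by simp
      then have "qbinom q l (l - m) = of_nat (Suc a')" by (simp add: qbinom_mult_m)
      moreover have "m \<le> l" "(l - m) mod m = 0" "(l - m) div m = a'" "l mod m = 0" "l div m = Suc a'"
        using l' m_pos by simp_all
      ultimately show ?thesis unfolding conv using j
        by (simp add: residue_fun_def binom_geom_Suc_mult del: of_nat_Suc)
    qed
  qed
qed

lemma qint_mod_m: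
  assumes "1 < m"
  shows "qint q k = qint q (k mod m)"
proof -
  have "q \<noteq> 1" using q_primitive assms by (metis power_one_right zero_less_one)
  moreover have "(1 - q) * qint q k = (1 - q) * qint q (k mod m)"
    using power_mod_root_of_unity[OF q_power_m] by (simp add: one_minus_mult_qint)
  ultimately show ?thesis by simp
qed

lemma conv_residue_fun_E1:
  assumes r: "Suc r < m"
  shows "conv n v \<xi> (residue_fun r s) (E1 n) = (\<lambda>p. qint q (Suc r) * residue_fun (Suc r) s p)"
proof (rule ext, clarify)
  fix j l
  show "conv n v \<xi> (residue_fun r s) (E1 n) (j, l) = qint q (Suc r) * residue_fun (Suc r) s (j, l)"
  proof (cases "j < n")
    case False
    then show ?thesis by (simp add: conv_def residue_fun_def)
  next
    case j: True
    have conv: "conv n v \<xi> (residue_fun r s) (E1 n) (j, l)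
        = (if 1 \<le> l then qbinom q l (l - 1) * residue_fun r s (j, l - 1) else 0)"
      by (rule conv_degree_indicator[OF j]) (simp add: E1_def)
    show ?thesis
    proof (cases l)
      case 0
      then show ?thesis unfolding conv using r by (simp add: residue_fun_def)
    next
      case (Suc l')
      have "Suc l' mod m = Suc r \<longleftrightarrow> l' mod m = r" "l' mod m = r \<Longrightarrow> Suc l' div m = l' div m"
        using r by (auto simp: mod_Suc div_Suc)
      moreover have "Suc l' mod m = Suc r \<Longrightarrow> qint q (Suc l') = qint q (Suc r)"
        using qint_mod_m[of "Suc l'"] r by simp
      ultimately show ?thesis unfolding conv using j Suc
        by (auto simp: residue_fun_def qbinom_Suc_self)
    qed
  qed
qed

lemma residue_fun_in_gen_algebra: "r < m \<Longrightarrow> residue_fun r (binom_geom t \<mu>) \<in> gen_algebra"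
proof (induction r)
  case 0
  show ?case
  proof (induction t)
    case 0
    show ?case using gen_alg.gen[of "psi n v \<mu>"] by (simp add: psi_eq_residue_fun)
  next
    case (Suc t)
    have "(\<lambda>p. inverse (of_nat (Suc t)) * conv n v \<xi> (residue_fun 0 (binom_geom t \<mu>)) (E2 n v) p) \<in> gen_algebra"
      by (intro gen_alg.smult gen_alg.mult Suc gen_alg.gen) simp
    moreover have "of_nat (Suc t) \<noteq> (0::'k)" by (rule of_nat_neq_0)
    ultimately show ?case unfolding conv_residue_fun_E2 by (simp add: mult.assoc[symmetric] del: of_nat_Suc)
  qed
next
  case (Suc r)
  have "qint q (Suc r) \<noteq> 0" using q_primitive Suc.prems by (intro qint_nonzero) blast
  moreover have "(\<lambda>p. inverse (qint q (Suc r)) * conv n v \<xi> (residue_fun r (binom_geom t \<mu>)) (E1 n) p)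
      \<in> gen_algebra"
    using Suc by (intro gen_alg.smult gen_alg.mult[OF Suc.IH] gen_alg.gen) simp_all
  ultimately show ?case unfolding conv_residue_fun_E1[OF Suc.prems] by (simp add: mult.assoc[symmetric])
qed

lemma exp_poly_funs_subset_gen_algebra: "exp_poly_funs \<subseteq> gen_algebra"
proof
  fix f assume "f \<in> exp_poly_funs"
  then show "f \<in> gen_algebra"
  proof (induction rule: exp_poly_funs.induct)
    case (column_fun j r t \<mu>)
    have "column_fun j r (binom_geom t \<mu>) = (\<lambda>p. if fst p = j then residue_fun r (binom_geom t \<mu>) p else 0)"
      by (auto simp: column_fun_def residue_fun_def fun_eq_iff)
    then show ?case
      using gen_algebra_restrict_column[OF residue_fun_in_gen_algebra normalised_residue_fun] column_fun
      by simp
  qed (auto intro: gen_alg_zero gen_alg.add gen_alg.smult)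
qed

lemma annihilated_monom_2:
  "(\<And>j l. j < n \<Longrightarrow> m < l \<Longrightarrow> f (j, l) = 0) \<Longrightarrow> annihilated (monom 1 2) f"
  unfolding annihilated_def poly_shift_monom using m_pos by simp

lemma annihilated_psi: "annihilated [:-c, 1:] (psi n v c)"
  unfolding annihilated_def poly_shift_linear
proof (intro allI impI)
  fix j l assume "j < n"
  moreover have "m dvd l + m \<longleftrightarrow> m dvd l" "m dvd l \<Longrightarrow> (l + m) div m = Suc (l div m)"
    using m_pos by auto
  ultimately show "psi n v c (j, l + m) - c * psi n v c (j, l) = 0"
    by (simp add: psi_def Let_def)
qed

lemma generators_linrec: "g \<in> range (psi n v) \<union> {omega n \<xi>, E2 n v, E1 n} \<Longrightarrow> g \<in> linrec_funs"
proof (elim UnE insertE rangeE)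
  fix c
  show "g = psi n v c \<Longrightarrow> g \<in> linrec_funs"
    using annihilated_psi[of c] unfolding linrec_funs_def
    by (auto simp: normalised_def psi_def intro!: exI[of _ "[:-c, 1:]"])
next
  have "monom (1::'k) 2 \<noteq> 0" by simp
  then show "g = omega n \<xi> \<Longrightarrow> g \<in> linrec_funs" "g = E2 n v \<Longrightarrow> g \<in> linrec_funs" "g = E1 n \<Longrightarrow> g \<in> linrec_funs"
    using m_pos unfolding linrec_funs_def
    by (auto simp: normalised_def omega_def E2_def E1_def intro!: annihilated_monom_2 exI[of _ "monom 1 2"])
qed simp

lemma counit_linrec: "counit n \<in> linrec_funs"
proof -
  have "annihilated (monom 1 2) (counit n)" using m_pos by (intro annihilated_monom_2) (simp add: counit_def)
  then show ?thesis by (auto simp: linrec_funs_def normalised_def counit_def intro!: exI[of _ "monom 1 2"])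
qed

lemma gen_algebra_subset_linrec_funs:
  assumes "alg_closed_field TYPE('k)"
  shows "gen_algebra \<subseteq> linrec_funs"
proof
  fix f assume "f \<in> gen_algebra"
  then show "f \<in> linrec_funs"
  proof (induction rule: gen_alg.induct)
    case (mult f h)
    then show ?case using linrec_funs_subset_exp_poly_funs[OF assms] by (auto intro: conv_exp_poly_funs_linrec)
  qed (auto intro: generators_linrec counit_linrec linrec_funs_add linrec_funs_cmult)
qed

section \<open>The finite dual\<close>

text \<open>Recurrences of step \<open>n\<close> rather than \<open>m\<close>: translating by \<open>x\<^sup>n\<close> commutes with \<open>g\<close>, so
  \<^term>\<open>annih_funs Q\<close> is stable under left and right translations and its annihilator
  is a two-sided ideal.\<close>

definition annih_funs :: "'k poly \<Rightarrow> (nat \<times> nat \<Rightarrow> 'k) set" where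
  "annih_funs Q = {f. normalised f \<and> (\<forall>j<n. \<forall>l. poly_shift n Q (\<lambda>l. f (j, l)) l = 0)}"

definition annih_ideal :: "'k poly \<Rightarrow> (nat \<times> nat \<Rightarrow> 'k) set" where
  "annih_ideal Q = {a \<in> Hspace n. \<forall>f\<in>annih_funs Q. evalf f a = 0}"

definition left_transl :: "(nat \<times> nat \<Rightarrow> 'k) \<Rightarrow> (nat \<times> nat \<Rightarrow> 'k) \<Rightarrow> (nat \<times> nat \<Rightarrow> 'k)" where
  "left_transl a f = (\<lambda>t. if fst t < n then \<Sum>p\<in>supp a. a p * bcoef \<xi> p t * f (bidx n p t) else 0)"

definition right_transl :: "(nat \<times> nat \<Rightarrow> 'k) \<Rightarrow> (nat \<times> nat \<Rightarrow> 'k) \<Rightarrow> (nat \<times> nat \<Rightarrow> 'k)" where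
  "right_transl a f = (\<lambda>t. if fst t < n then \<Sum>p\<in>supp a. a p * bcoef \<xi> t p * f (bidx n t p) else 0)"

lemma evalf_hmul_left:
  assumes a: "a \<in> Hspace n" and b: "b \<in> Hspace n"
  shows "evalf f (hmul n \<xi> a b) = evalf (left_transl a f) b"
proof -
  have fin: "finite (supp a)" "finite (supp b)" using a b by (auto simp: Hspace_def)
  have "evalf f (hmul n \<xi> a b) = (\<Sum>q\<in>supp b. \<Sum>p\<in>supp a. bcoef \<xi> p q * a p * b q * f (bidx n p q))"
    by (subst sum.swap) (rule evalf_hmul[OF fin(1) _ fin(2)]; simp)
  also have "\<dots> = evalf (left_transl a f) b"
    unfolding evalf_def left_transl_def using Hspace_supp_fst_less[OF b]
    by (intro sum.cong refl) (simp add: sum_distrib_left algebra_simps)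
  finally show ?thesis .
qed

lemma evalf_hmul_right:
  assumes a: "a \<in> Hspace n" and b: "b \<in> Hspace n"
  shows "evalf f (hmul n \<xi> b a) = evalf (right_transl a f) b"
proof -
  have fin: "finite (supp a)" "finite (supp b)" using a b by (auto simp: Hspace_def)
  have "evalf f (hmul n \<xi> b a) = (\<Sum>q\<in>supp b. \<Sum>p\<in>supp a. bcoef \<xi> q p * b q * a p * f (bidx n q p))"
    by (rule evalf_hmul[OF fin(2) _ fin(1)]) simp_all
  also have "\<dots> = evalf (right_transl a f) b"
    unfolding evalf_def right_transl_def using Hspace_supp_fst_less[OF b]
    by (intro sum.cong refl) (simp add: sum_distrib_left algebra_simps)
  finally show ?thesis .
qed

lemma left_transl_annih_funs: "f \<in> annih_funs Q \<Longrightarrow> left_transl a f \<in> annih_funs Q"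
proof -
  assume f: "f \<in> annih_funs Q"
  have "poly_shift n Q (\<lambda>l. left_transl a f (j, l)) l = 0" if j: "j < n" for j l
  proof -
    have "poly_shift n Q (\<lambda>l. left_transl a f (j, l)) l = (\<Sum>k\<le>degree Q. \<Sum>p\<in>supp a.
        coeff Q k * (a p * \<xi> ^ (snd p * j) * f ((fst p + j) mod n, snd p + l + n * k)))"
      using j by (simp add: poly_shift_def left_transl_def bcoef_def bidx_def sum_distrib_left algebra_simps)
    also have "\<dots> = (\<Sum>p\<in>supp a. a p * \<xi> ^ (snd p * j) * poly_shift n Q (\<lambda>l. f ((fst p + j) mod n, l)) (snd p + l))"
      by (subst sum.swap) (simp add: poly_shift_def sum_distrib_left algebra_simps)
    also have "\<dots> = 0" using f n_pos by (intro sum.neutral ballI) (simp add: annih_funs_def)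
    finally show ?thesis .
  qed
  then show ?thesis by (simp add: annih_funs_def normalised_def left_transl_def)
qed

lemma right_transl_annih_funs: "f \<in> annih_funs Q \<Longrightarrow> right_transl a f \<in> annih_funs Q"
proof -
  assume f: "f \<in> annih_funs Q"
  have periodic: "bcoef \<xi> (j, l + n * k) p = \<xi> ^ (l * fst p)" for j l k p
  proof -
    have "\<xi> ^ ((l + n * k) * fst p) = \<xi> ^ (l * fst p) * (\<xi> ^ n) ^ (k * fst p)"
      by (simp add: power_add algebra_simps flip: power_mult)
    then show ?thesis using root by (simp add: bcoef_def)
  qed
  have "poly_shift n Q (\<lambda>l. right_transl a f (j, l)) l = 0" if j: "j < n" for j l
  proof -
    have "poly_shift n Q (\<lambda>l. right_transl a f (j, l)) l = (\<Sum>k\<le>degree Q. \<Sum>p\<in>supp a.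
        coeff Q k * (a p * \<xi> ^ (l * fst p) * f ((j + fst p) mod n, snd p + l + n * k)))"
      unfolding poly_shift_def right_transl_def fst_conv if_P[OF j] periodic
      by (simp add: bidx_def sum_distrib_left algebra_simps)
    also have "\<dots> = (\<Sum>p\<in>supp a. a p * \<xi> ^ (l * fst p) * poly_shift n Q (\<lambda>l. f ((j + fst p) mod n, l)) (snd p + l))"
      by (subst sum.swap) (simp add: poly_shift_def sum_distrib_left algebra_simps)
    also have "\<dots> = 0" using f n_pos by (intro sum.neutral ballI) (simp add: annih_funs_def)
    finally show ?thesis .
  qed
  then show ?thesis by (simp add: annih_funs_def normalised_def right_transl_def)
qed

lemma is_ideal_annih_ideal: "is_ideal n \<xi> (annih_ideal Q)"
  unfolding is_ideal_def
proof (intro conjI ballI allI)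
  show "annih_ideal Q \<subseteq> Hspace n" "(\<lambda>_. 0) \<in> annih_ideal Q"
    by (auto simp: annih_ideal_def Hspace_zero evalf_zero)
next
  fix a b :: "nat \<times> nat \<Rightarrow> 'k" assume "a \<in> annih_ideal Q" "b \<in> annih_ideal Q"
  then show "(\<lambda>p. a p + b p) \<in> annih_ideal Q"
    by (auto simp: annih_ideal_def Hspace_add evalf_add)
next
  fix c and a :: "nat \<times> nat \<Rightarrow> 'k" assume "a \<in> annih_ideal Q"
  then show "(\<lambda>p. c * a p) \<in> annih_ideal Q"
    by (auto simp: annih_ideal_def Hspace_cmult evalf_cmult)
next
  fix a b :: "nat \<times> nat \<Rightarrow> 'k" assume a: "a \<in> Hspace n" and b: "b \<in> annih_ideal Q"
  then have b': "b \<in> Hspace n" by (simp add: annih_ideal_def)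
  show "hmul n \<xi> a b \<in> annih_ideal Q"
    using b left_transl_annih_funs
    by (auto simp: annih_ideal_def Hspace_hmul[OF n_pos a b'] evalf_hmul_left[OF a b'])
  show "hmul n \<xi> b a \<in> annih_ideal Q"
    using b right_transl_annih_funs
    by (auto simp: annih_ideal_def Hspace_hmul[OF n_pos b' a] evalf_hmul_right[OF a b'])
qed

lemma annih_funs_determined_by_box:
  assumes Q: "Q \<noteq> 0" and j: "j < n"
  shows "\<exists>w. \<forall>f\<in>annih_funs Q. f (j, l) = (\<Sum>p\<in>{..<n} \<times> {..<n * degree Q}. w p * f p)"
proof (induction l rule: less_induct)
  case (less l)
  let ?B = "{..<n} \<times> {..<n * degree Q}"
  show ?case
  proof (cases "l < n * degree Q")
    case True
    show ?thesis
    proof (intro exI ballI)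
      fix f :: "nat \<times> nat \<Rightarrow> 'k"
      show "f (j, l) = (\<Sum>p\<in>?B. of_bool (p = (j, l)) * f p)"
        using True j by (simp add: Int_def Collect_conv_if)
    qed
  next
    case False
    define l0 where "l0 = l - n * degree Q"
    have l: "l = l0 + n * degree Q" using False by (simp add: l0_def)
    have "\<forall>k<degree Q. \<exists>w. \<forall>f\<in>annih_funs Q. f (j, l0 + n * k) = (\<Sum>p\<in>?B. w p * f p)"
      using less n_pos l by simp
    then obtain W where W: "\<And>k f. k < degree Q \<Longrightarrow> f \<in> annih_funs Q \<Longrightarrow> f (j, l0 + n * k) = (\<Sum>p\<in>?B. W k p * f p)"
      by metis
    have "f (j, l) = (\<Sum>p\<in>?B. (- (\<Sum>k<degree Q. coeff Q k * W k p) / lead_coeff Q) * f p)"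
      if f: "f \<in> annih_funs Q" for f
    proof -
      have "(\<Sum>k<degree Q. coeff Q k * f (j, l0 + n * k)) + lead_coeff Q * f (j, l) = 0"
        using f j by (simp add: annih_funs_def poly_shift_def l lessThan_Suc_atMost[symmetric])
      then have "f (j, l) = - (\<Sum>k<degree Q. coeff Q k * (\<Sum>p\<in>?B. W k p * f p)) / lead_coeff Q"
        using Q W f by (simp add: field_simps add_eq_0_iff)
      then show ?thesis
        by (simp add: sum_distrib_left sum_distrib_right sum.swap[of _ ?B] sum_divide_distrib
            algebra_simps flip: sum_negf)
    qed
    then show ?thesis by (intro exI[of _ "\<lambda>p. - (\<Sum>k<degree Q. coeff Q k * W k p) / lead_coeff Q"]) blast
  qed
qed

lemma finite_codim_annih_ideal: "Q \<noteq> 0 \<Longrightarrow> finite_codim n (annih_ideal Q)"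
  unfolding annih_ideal_def
  by (rule finite_codim_annihilator[where B = "{..<n} \<times> {..<n * degree Q}"])
    (use annih_funs_determined_by_box in auto)

lemma linrec_funs_subset_finite_dual:
  assumes "alg_closed_field TYPE('k)"
  shows "linrec_funs \<subseteq> finite_dual n \<xi>"
proof
  fix f assume "f \<in> linrec_funs"
  then obtain P where P: "P \<noteq> 0" "annihilated P f" and f: "normalised f"
    by (auto simp: linrec_funs_def)
  obtain Q where Q: "Q \<noteq> 0" "P dvd pcompose Q (monom 1 (gcd n v))"
    using exists_multiple_pcompose_monom[OF assms P(1)] by blast
  have "poly_shift n Q (\<lambda>l. f (j, l)) l = 0" if "j < n" for j l
  proof -
    have "poly_shift m (pcompose Q (monom 1 (gcd n v))) (\<lambda>l. f (j, l)) l = 0"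
      by (rule poly_shift_dvd[OF Q(2)]) (use P(2) that in \<open>simp add: annihilated_def\<close>)
    then show ?thesis by (simp add: poly_shift_pcompose_monom)
  qed
  then have "f \<in> annih_funs Q" using f by (simp add: annih_funs_def)
  then show "f \<in> finite_dual n \<xi>"
    using f is_ideal_annih_ideal finite_codim_annih_ideal[OF Q(1)] unfolding finite_dual_def
    by (auto simp: normalised_def annih_ideal_def intro!: exI[of _ "annih_ideal Q"])
qed

lemma finite_dual_subset_linrec_funs: "finite_dual n \<xi> \<subseteq> linrec_funs"
proof
  fix f assume "f \<in> finite_dual n \<xi>"
  then obtain I where f: "normalised f" and I: "is_ideal n \<xi> I" "finite_codim n I"
    and f_I: "\<forall>a\<in>I. evalf f a = 0"
    by (auto simp: finite_dual_def normalised_def)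
  \<comment> \<open>Some nonzero polynomial in \<open>x\<^sup>m\<close> lies in \<open>I\<close>; its translates then give a recurrence.\<close>
  have x_powers: "single (0, m * k) (1::'k) \<in> Hspace n" for k using n_pos by (intro Hspace_single) simp
  obtain N d where d: "\<exists>k\<le>N. d k \<noteq> 0" and z: "(\<lambda>p. \<Sum>k\<le>N. d k * single (0, m * k) 1 p) \<in> I"
    using finite_codim_ideal_nontrivial_lincomb[where y = "\<lambda>k. single (0, m * k) 1", OF I x_powers]
    by blast
  have "annihilated (\<Sum>k\<le>N. monom (d k) k) f"
    unfolding annihilated_def
  proof (intro allI impI)
    fix j l assume j: "j < n"
    have "hmul n \<xi> (single (j, l) 1) (\<lambda>p. \<Sum>k\<le>N. d k * single (0, m * k) 1 p) \<in> I"
      using I(1) z j Hspace_single[of "(j, l)" n "1::'k"] unfolding is_ideal_def by simp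
    then show "poly_shift m (\<Sum>k\<le>N. monom (d k) k) (\<lambda>l. f (j, l)) l = 0"
      using f_I evalf_hmul_single_lincomb[OF n_pos j m_pos, of f \<xi> l d N] by (simp add: poly_shift_sum_monom)
  qed
  moreover have "(\<Sum>k\<le>N. monom (d k) k) \<noteq> 0"
  proof
    assume "(\<Sum>k\<le>N. monom (d k) k) = 0"
    then have "d k = 0" if "k \<le> N" for k using coeff_sum_monom[of d N k] that by simp
    then show False using d by blast
  qed
  ultimately show "f \<in> linrec_funs" using f by (auto simp: linrec_funs_def)
qed

end

theorem proposition3p3:
  fixes n v :: nat and \<xi> :: "'k::field_char_0"
  assumes "alg_closed_field TYPE('k)"
    and "1 \<le> n" and "v \<le> n - 1"
    and "\<xi> ^ n = 1" and "\<forall>k. 0 < k \<and> k < n \<longrightarrow> \<xi> ^ k \<noteq> 1"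
  shows "finite_dual n \<xi> =
    gen_alg n v \<xi> (range (psi n v) \<union> {omega n \<xi>, E2 n v, E1 n})"
proof -
  interpret T_inf n v \<xi> using assms(2,4,5) by unfold_locales auto
  have "finite_dual n \<xi> = linrec_funs"
    using finite_dual_subset_linrec_funs linrec_funs_subset_finite_dual[OF assms(1)] by blast
  moreover have "gen_algebra = linrec_funs"
    using gen_algebra_subset_linrec_funs[OF assms(1)] linrec_funs_subset_exp_poly_funs[OF assms(1)]
      exp_poly_funs_subset_gen_algebra by blast
  ultimately show ?thesis by simp
qed

end
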